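(* In the LQ setting of the context, let $\mu>\rho_\alpha$ and $\lambda\ge2\mu$. Then the problem of minimizing $J_\lambda$ over $\mathcal{U}_{-\mu}$ has at most one optimal control in $\mathcal{U}_{-\mu}$ (uniqueness understood up to $\mathrm{Leb}\otimes\mathbb{P}$-null sets).
   Context: $(\Omega,\mathcal{F},\mathbb{P})$ is a complete probability space with a one-dimensional Brownian motion $W$ and augmented natural filtration $\mathbb{F}$. Fix constants $x_0,b,\sigma\in\mathbb{R}$, $c\in\mathbb{R}\setminus\{0\}$, $\gamma>0$, $\alpha\in(\frac12,1]$, $\delta\ge0$, $\lambda>0$. For $\beta\in\mathbb{R}$, $L^{2,\beta}_{\mathbb{F}}(0,\infty;\mathbb{R})$ is the set of real jointly measurable adapted processes $f$ with $\mathbb{E}\int_0^\infty e^{2\beta t}|f(t)|^2dt<\infty$, and $\mathcal{U}_{-\mu}:=L^{2,-\mu}_{\mathbb{F}}(0,\infty;\mathbb{R})$. Let $\rho_\alpha:=0$ if $b=0$, and if $b\ne0$ let $\rho_\alpha>0$ be the number satisfying $|b|(1+e^{-\rho_\alpha\delta})\rho_\alpha^{-\alpha}=1$. For $\mu>\rho_\alpha$ and $u\in\mathcal{U}_{-\mu}$, $X^u$ denotes the unique solution in $L^{2,-\mu}_{\mathbb{F}}(0,\infty;\mathbb{R})$ of $X^u(t)=x_0+\frac{1}{\Gamma(\alpha)}\int_0^t(t-s)^{\alpha-1}\{bX^u(s-\delta)+cu(s)\}ds+\frac{\sigma}{\Gamma(\alpha)}\int_0^t(t-s)^{\alpha-1}dW(s)$,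 $t\ge0$, $X^u(t)=x_0$ on $[-\delta,0]$ (the mild form of the Caputo fractional SDDE ${}^C D^\alpha_{0+}X^u=bX^u(t-\delta)+cu(t)+\sigma\dot W$). The cost is $J_\lambda(u)=\frac12\mathbb{E}\int_0^\infty e^{-\lambda t}\{|X^u(t)|^2+\frac1\gamma|u(t)|^2\}dt$. An optimal control in $\mathcal{U}_{-\mu}$ is $\hat u\in\mathcal{U}_{-\mu}$ with $J_\lambda(\hat u)=\inf_{u\in\mathcal{U}_{-\mu}}J_\lambda(u)$. *)

theory Defs
  imports "HOL-Probability.Probability"
begin

definition brownian_motion :: "'a measure \<Rightarrow> (real \<Rightarrow> 'a \<Rightarrow> real) \<Rightarrow> bool" where
  "brownian_motion M W \<longleftrightarrow>
     prob_space M \<and>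
     (\<forall>t\<ge>0. W t \<in> borel_measurable M) \<and>
     (\<forall>\<omega>\<in>space M. W 0 \<omega> = 0) \<and>
     (\<forall>\<omega>\<in>space M. continuous_on {0..} (\<lambda>t. W t \<omega>)) \<and>
     (\<forall>s t. 0 \<le> s \<and> s < t \<longrightarrow>
        distributed M lborel (\<lambda>\<omega>. W t \<omega> - W s \<omega>) (normal_density 0 (sqrt (t - s)))) \<and>
     (\<forall>(n::nat) (tt::nat \<Rightarrow> real). tt 0 \<ge> 0 \<and> (\<forall>i<n. tt i < tt (Suc i)) \<longrightarrow>
        prob_space.indep_vars M (\<lambda>_. borel) (\<lambda>i \<omega>. W (tt (Suc i)) \<omega> - W (tt i) \<omega>) {..<n})"

definition aug_filtration :: "'a measure \<Rightarrow> (real \<Rightarrow> 'a \<Rightarrow> real) \<Rightarrow> real \<Rightarrow> 'a set set" where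
  "aug_filtration M W t =
     sigma_sets (space M)
       ((\<Union>s\<in>{0..t}. {W s -` B \<inter> space M | B. B \<in> sets borel}) \<union> null_sets M)"

definition L2F :: "'a measure \<Rightarrow> (real \<Rightarrow> 'a set set) \<Rightarrow> real \<Rightarrow> (real \<Rightarrow> 'a \<Rightarrow> real) set" where
  "L2F M F \<beta> = {f.
     (\<lambda>p. indicator {0..} (fst p) * f (fst p) (snd p)) \<in> borel_measurable (lborel \<Otimes>\<^sub>M M) \<and>
     (\<forall>t\<ge>0. f t \<in> borel_measurable (sigma (space M) (F t))) \<and>
     (\<integral>\<^sup>+\<omega>. (\<integral>\<^sup>+t. ennreal (indicator {0..} t * exp (2 * \<beta> * t) * (f t \<omega>)\<^sup>2) \<partial>lborel) \<partial>M) < \<infinity>}"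

definition step_fun :: "real \<Rightarrow> nat \<Rightarrow> (nat \<Rightarrow> real) \<Rightarrow> real \<Rightarrow> real" where
  "step_fun t n c s = c (nat \<lfloor>real n * s / t\<rfloor>)"

definition elem_int :: "(real \<Rightarrow> 'a \<Rightarrow> real) \<Rightarrow> real \<Rightarrow> nat \<Rightarrow> (nat \<Rightarrow> real) \<Rightarrow> 'a \<Rightarrow> real" where
  "elem_int W t n c \<omega> =
     (\<Sum>i<n. c i * (W (real (Suc i) * t / real n) \<omega> - W (real i * t / real n) \<omega>))"

text \<open>Y is (a version of) the Wiener integral of g over [0,t] w.r.t. W: the L^2(P)-limit of
  elementary integrals of any sequence of step functions converging to g in L^2(0,t).\<close>
definition is_wiener_integral ::
  "'a measure \<Rightarrow> (real \<Rightarrow> 'a \<Rightarrow> real) \<Rightarrow> (real \<Rightarrow> real) \<Rightarrow> real \<Rightarrow> ('a \<Rightarrow> real) \<Rightarrow> bool" where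
  "is_wiener_integral M W g t Y \<longleftrightarrow>
     Y \<in> borel_measurable M \<and>
     (\<forall>(n::nat \<Rightarrow> nat) (c::nat \<Rightarrow> nat \<Rightarrow> real).
        (\<forall>k. n k > 0) \<longrightarrow>
        ((\<lambda>k. \<integral>\<^sup>+s\<in>{0..t}. ennreal ((g s - step_fun t (n k) (c k) s)\<^sup>2) \<partial>lborel) \<longlonglongrightarrow> 0) \<longrightarrow>
        ((\<lambda>k. \<integral>\<^sup>+\<omega>. ennreal ((Y \<omega> - elem_int W t (n k) (c k) \<omega>)\<^sup>2) \<partial>M) \<longlonglongrightarrow> 0))"

text \<open>X solves the mild equation for control u (with X = x0 on [-delta,0]) and lies in
  L^{2,-mu}_F; the equation holds for a.e. t >= 0, P-a.s.\<close>
definition is_state ::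
  "'a measure \<Rightarrow> (real \<Rightarrow> 'a \<Rightarrow> real) \<Rightarrow> real \<Rightarrow> real \<Rightarrow> real \<Rightarrow> real \<Rightarrow> real \<Rightarrow> real \<Rightarrow> real
   \<Rightarrow> (real \<Rightarrow> 'a \<Rightarrow> real) \<Rightarrow> (real \<Rightarrow> 'a \<Rightarrow> real) \<Rightarrow> bool" where
  "is_state M W x0 b c \<sigma> \<alpha> \<delta> \<mu> u X \<longleftrightarrow>
     X \<in> L2F M (aug_filtration M W) (-\<mu>) \<and>
     (AE t in lborel. t \<ge> 0 \<longrightarrow>
        (\<exists>Y. is_wiener_integral M W (\<lambda>s. (t - s) powr (\<alpha> - 1)) t Y \<and>
          (AE \<omega> in M.
             X t \<omega> = x0
               + 1 / Gamma \<alpha> * (\<integral>s\<in>{0..t}. (t - s) powr (\<alpha> - 1)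
                    * (b * (if s < \<delta> then x0 else X (s - \<delta>) \<omega>) + c * u s \<omega>) \<partial>lborel)
               + \<sigma> / Gamma \<alpha> * Y \<omega>)))"

definition cost ::
  "'a measure \<Rightarrow> real \<Rightarrow> real \<Rightarrow> (real \<Rightarrow> 'a \<Rightarrow> real) \<Rightarrow> (real \<Rightarrow> 'a \<Rightarrow> real) \<Rightarrow> ennreal" where
  "cost M \<gamma> lam X u =
     ennreal (1/2) * (\<integral>\<^sup>+\<omega>. (\<integral>\<^sup>+t. ennreal (indicator {0..} t * exp (- lam * t)
        * ((X t \<omega>)\<^sup>2 + (u t \<omega>)\<^sup>2 / \<gamma>)) \<partial>lborel) \<partial>M)"

text \<open>J_lambda(u), evaluated on the (unique up to null sets) state X^u; all solutions give the
  same value, so we take the infimum over the set of solutions.\<close>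
definition J ::
  "'a measure \<Rightarrow> (real \<Rightarrow> 'a \<Rightarrow> real) \<Rightarrow> real \<Rightarrow> real \<Rightarrow> real \<Rightarrow> real \<Rightarrow> real \<Rightarrow> real \<Rightarrow> real
   \<Rightarrow> real \<Rightarrow> real \<Rightarrow> (real \<Rightarrow> 'a \<Rightarrow> real) \<Rightarrow> ennreal" where
  "J M W x0 b c \<sigma> \<alpha> \<delta> \<mu> \<gamma> lam u =
     (INF X\<in>{X. is_state M W x0 b c \<sigma> \<alpha> \<delta> \<mu> u X}. cost M \<gamma> lam X u)"

definition rho_alpha :: "real \<Rightarrow> real \<Rightarrow> real \<Rightarrow> real" where
  "rho_alpha b \<alpha> \<delta> =
     (if b = 0 then 0 else THE \<rho>. \<rho> > 0 \<and> \<bar>b\<bar> * (1 + exp (- \<rho> * \<delta>)) * \<rho> powr (- \<alpha>) = 1)"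

definition is_optimal_control ::
  "'a measure \<Rightarrow> (real \<Rightarrow> 'a \<Rightarrow> real) \<Rightarrow> real \<Rightarrow> real \<Rightarrow> real \<Rightarrow> real \<Rightarrow> real \<Rightarrow> real \<Rightarrow> real
   \<Rightarrow> real \<Rightarrow> real \<Rightarrow> (real \<Rightarrow> 'a \<Rightarrow> real) \<Rightarrow> bool" where
  "is_optimal_control M W x0 b c \<sigma> \<alpha> \<delta> \<mu> \<gamma> lam u \<longleftrightarrow>
     u \<in> L2F M (aug_filtration M W) (-\<mu>) \<and>
     J M W x0 b c \<sigma> \<alpha> \<delta> \<mu> \<gamma> lam u =
       (INF v\<in>L2F M (aug_filtration M W) (-\<mu>). J M W x0 b c \<sigma> \<alpha> \<delta> \<mu> \<gamma> lam v)"

end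

theory Submission
  imports Defs
begin

text \<open>
  Uniqueness comes from strict convexity of the cost. If \<open>u\<^sub>1\<close> and \<open>u\<^sub>2\<close> are optimal, take states
  \<open>X\<^sub>1\<close>, \<open>X\<^sub>2\<close> whose costs come within \<open>\<epsilon>\<close> of the optimal value \<open>m\<close>. The mild equation is affine
  in the pair (state, control), and Wiener integrals of a fixed kernel can be averaged, so the midpoint
  \<open>((X\<^sub>1 + X\<^sub>2)/2, (u\<^sub>1 + u\<^sub>2)/2)\<close> is again admissible. The parallelogram law then gives
  \<open>2 m + \<parallel>u\<^sub>1 - u\<^sub>2\<parallel>\<^sup>2 / (4 \<gamma>) \<le> 2 m + 2 \<epsilon>\<close> in the discounted \<open>L\<^sup>2\<close> norm, hence \<open>u\<^sub>1 = u\<^sub>2\<close> almost everywhere.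

  The cancellation needs \<open>m < \<infinity>\<close>. The feedback control \<open>v(s) = -(b/c) X(s - \<delta>)\<close> removes the drift,
  so its state is \<open>x\<^sub>0 + \<sigma>/\<Gamma>(\<alpha>) \<integral>\<^sub>0\<^sup>t (t - s)\<^sup>\<alpha>\<^sup>-\<^sup>1 dW(s)\<close>, whose second moment grows linearly because
  \<open>\<alpha> > 1/2\<close>; with \<open>\<lambda> \<ge> 2 \<mu>\<close> its cost is finite.
\<close>

section \<open>Brownian motion\<close>

lemma bm_prob_space: "brownian_motion M W \<Longrightarrow> prob_space M"
  by (simp add: brownian_motion_def)

lemma bm_measurable: "brownian_motion M W \<Longrightarrow> 0 \<le> t \<Longrightarrow> W t \<in> borel_measurable M"
  by (simp add: brownian_motion_def)

lemma bm_continuous: "brownian_motion M W \<Longrightarrow> \<omega> \<in> space M \<Longrightarrow> continuous_on {0..} (\<lambda>t. W t \<omega>)"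
  by (simp add: brownian_motion_def)

lemma bm_increment_moments:
  assumes bm: "brownian_motion M W" and st: "0 \<le> s" "s < t"
  shows "integrable M (\<lambda>\<omega>. W t \<omega> - W s \<omega>)"
    and "(\<integral>\<omega>. W t \<omega> - W s \<omega> \<partial>M) = 0"
    and "integrable M (\<lambda>\<omega>. (W t \<omega> - W s \<omega>)\<^sup>2)"
    and "(\<integral>\<omega>. (W t \<omega> - W s \<omega>)\<^sup>2 \<partial>M) = t - s"
proof -
  interpret prob_space M using bm_prob_space[OF bm] .
  have D: "distributed M lborel (\<lambda>\<omega>. W t \<omega> - W s \<omega>) (normal_density 0 (sqrt (t - s)))"
    using bm st by (simp add: brownian_motion_def)
  have sp: "0 < sqrt (t - s)" using st by simp
  have nn: "\<And>x. 0 \<le> normal_density 0 (sqrt (t - s)) x" by (simp add: normal_density_nonneg)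
  have i1: "integrable lborel (\<lambda>x. normal_density 0 (sqrt (t - s)) x * x)"
    by (intro integrable_normal_moment_nz_1 sp)
  show "integrable M (\<lambda>\<omega>. W t \<omega> - W s \<omega>)"
    using distributed_integrable[OF D, of "\<lambda>x. x"] i1 nn by simp
  show "(\<integral>\<omega>. W t \<omega> - W s \<omega> \<partial>M) = 0"
    using normal_distributed_expectation[OF sp D] by simp
  have i2: "integrable lborel (\<lambda>x. normal_density 0 (sqrt (t - s)) x * x\<^sup>2)"
    using integrable_normal_moment[OF sp, where k=2 and \<mu>=0] by simp
  show "integrable M (\<lambda>\<omega>. (W t \<omega> - W s \<omega>)\<^sup>2)"
    using distributed_integrable[OF D, of "\<lambda>x. x\<^sup>2"] i2 nn by simp
  have "variance (\<lambda>\<omega>. W t \<omega> - W s \<omega>) = (sqrt (t - s))\<^sup>2"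
    using normal_distributed_variance[OF sp D] .
  then show "(\<integral>\<omega>. (W t \<omega> - W s \<omega>)\<^sup>2 \<partial>M) = t - s"
    using normal_distributed_expectation[OF sp D] st by simp
qed

lemma bm_increments_uncorrelated:
  assumes bm: "brownian_motion M W" and t: "0 < t" and N: "0 < N" and ij: "i < N" "j < N" "i \<noteq> j"
  shows "(\<integral>\<omega>. (W (real (Suc i) * t / real N) \<omega> - W (real i * t / real N) \<omega>)
             * (W (real (Suc j) * t / real N) \<omega> - W (real j * t / real N) \<omega>) \<partial>M) = 0"
    and "integrable M (\<lambda>\<omega>. (W (real (Suc i) * t / real N) \<omega> - W (real i * t / real N) \<omega>)
             * (W (real (Suc j) * t / real N) \<omega> - W (real j * t / real N) \<omega>))"
proof -
  interpret prob_space M using bm_prob_space[OF bm] .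
  define tt where "tt k = real k * t / real N" for k :: nat
  have tt0: "tt 0 \<ge> 0" by (simp add: tt_def)
  have ttm: "\<forall>k<N. tt k < tt (Suc k)" using t N by (auto simp: tt_def divide_strict_right_mono)
  have ind: "indep_vars (\<lambda>_. borel) (\<lambda>k \<omega>. W (tt (Suc k)) \<omega> - W (tt k) \<omega>) {..<N}"
    using bm tt0 ttm unfolding brownian_motion_def by blast
  have ind2: "indep_vars (\<lambda>_. borel) (\<lambda>k \<omega>. W (tt (Suc k)) \<omega> - W (tt k) \<omega>) {i, j}"
    by (rule indep_vars_subset[OF ind]) (use ij in auto)
  have intk: "integrable M (\<lambda>\<omega>. W (tt (Suc k)) \<omega> - W (tt k) \<omega>)" if "k < N" for k
    by (rule bm_increment_moments(1)[OF bm]) (use tt0 ttm that t N in \<open>auto simp: tt_def\<close>)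
  have e0: "(\<integral>\<omega>. W (tt (Suc k)) \<omega> - W (tt k) \<omega> \<partial>M) = 0" if "k < N" for k
    by (rule bm_increment_moments(2)[OF bm]) (use tt0 ttm that t N in \<open>auto simp: tt_def\<close>)
  have "(\<integral>\<omega>. (\<Prod>k\<in>{i,j}. W (tt (Suc k)) \<omega> - W (tt k) \<omega>) \<partial>M)
        = (\<Prod>k\<in>{i,j}. \<integral>\<omega>. W (tt (Suc k)) \<omega> - W (tt k) \<omega> \<partial>M)"
    by (rule indep_vars_lebesgue_integral[OF _ ind2]) (use intk ij in auto)
  then show "(\<integral>\<omega>. (W (real (Suc i) * t / real N) \<omega> - W (real i * t / real N) \<omega>)
             * (W (real (Suc j) * t / real N) \<omega> - W (real j * t / real N) \<omega>) \<partial>M) = 0"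
    using ij e0 by (simp add: tt_def)
  have "integrable M (\<lambda>\<omega>. (\<Prod>k\<in>{i,j}. W (tt (Suc k)) \<omega> - W (tt k) \<omega>))"
    by (rule indep_vars_integrable[OF _ ind2]) (use intk ij in auto)
  then show "integrable M (\<lambda>\<omega>. (W (real (Suc i) * t / real N) \<omega> - W (real i * t / real N) \<omega>)
             * (W (real (Suc j) * t / real N) \<omega> - W (real j * t / real N) \<omega>))"
    using ij by (simp add: tt_def)
qed

section \<open>Elementary stochastic integrals\<close>

lemma step_fun_measurable[measurable]: "(\<lambda>s. step_fun t n c s) \<in> borel_measurable borel"
  unfolding step_fun_def by measurable

lemma elem_int_measurable[measurable]:
  assumes bm: "brownian_motion M W" and t: "0 \<le> t"
  shows "elem_int W t n c \<in> borel_measurable M"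
proof -
  have [measurable]: "W (real i * t / real n) \<in> borel_measurable M" for i
    by (rule bm_measurable[OF bm]) (use t in simp)
  have [measurable]: "W (real (Suc i) * t / real n) \<in> borel_measurable M" for i
    by (rule bm_measurable[OF bm]) (use t in simp)
  show ?thesis unfolding elem_int_def by measurable
qed

lemma elem_int_second_moment:
  assumes bm: "brownian_motion M W" and t: "0 < t" and N: "0 < N"
  shows "integrable M (\<lambda>\<omega>. (elem_int W t N a \<omega>)\<^sup>2)"
    and "(\<integral>\<omega>. (elem_int W t N a \<omega>)\<^sup>2 \<partial>M) = t / real N * (\<Sum>i<N. (a i)\<^sup>2)"
proof -
  interpret prob_space M using bm_prob_space[OF bm] .
  define d where "d i \<omega> = W (real (Suc i) * t / real N) \<omega> - W (real i * t / real N) \<omega>" for i \<omega>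
  have sq: "(elem_int W t N a \<omega>)\<^sup>2 = (\<Sum>i<N. \<Sum>j<N. a i * a j * (d i \<omega> * d j \<omega>))" for \<omega>
    unfolding elem_int_def d_def power2_eq_square sum_product by (simp add: algebra_simps)
  have st: "0 \<le> real i * t / real N" "real i * t / real N < real (Suc i) * t / real N" for i
    using t N by (auto simp: divide_strict_right_mono)
  have dd: "real (Suc i) * t / real N - real i * t / real N = t / real N" for i
    by (simp add: diff_divide_distrib[symmetric] algebra_simps)
  have int_ij: "integrable M (\<lambda>\<omega>. a i * a j * (d i \<omega> * d j \<omega>))" if "i < N" "j < N" for i j
  proof (cases "i = j")
    case True
    have "integrable M (\<lambda>\<omega>. (d i \<omega>)\<^sup>2)" unfolding d_def by (rule bm_increment_moments(3)[OF bm st])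
    then show ?thesis using True by (simp add: power2_eq_square)
  next
    case False
    show ?thesis unfolding d_def
      by (intro integrable_mult_right bm_increments_uncorrelated(2)[OF bm t N that False])
  qed
  have e_ij: "(\<integral>\<omega>. a i * a j * (d i \<omega> * d j \<omega>) \<partial>M) = (if i = j then (a i)\<^sup>2 * (t / real N) else 0)"
    if "i < N" "j < N" for i j
  proof (cases "i = j")
    case True
    have "(\<integral>\<omega>. (d i \<omega>)\<^sup>2 \<partial>M) = t / real N" unfolding d_def
      using bm_increment_moments(4)[OF bm st, of i] dd by simp
    then show ?thesis using True by (simp add: power2_eq_square)
  next
    case False
    show ?thesis unfolding d_def
      using bm_increments_uncorrelated(1)[OF bm t N that False] False by simp
  qed
  show "integrable M (\<lambda>\<omega>. (elem_int W t N a \<omega>)\<^sup>2)"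
    unfolding sq by (rule Bochner_Integration.integrable_sum, rule Bochner_Integration.integrable_sum, rule int_ij) auto
  have "(\<integral>\<omega>. (elem_int W t N a \<omega>)\<^sup>2 \<partial>M) = (\<Sum>i<N. \<Sum>j<N. \<integral>\<omega>. a i * a j * (d i \<omega> * d j \<omega>) \<partial>M)"
  proof -
    have "(\<integral>\<omega>. (\<Sum>i<N. \<Sum>j<N. a i * a j * (d i \<omega> * d j \<omega>)) \<partial>M)
       = (\<Sum>i<N. \<integral>\<omega>. (\<Sum>j<N. a i * a j * (d i \<omega> * d j \<omega>)) \<partial>M)"
      by (rule Bochner_Integration.integral_sum, rule Bochner_Integration.integrable_sum, rule int_ij) auto
    also have "\<dots> = (\<Sum>i<N. \<Sum>j<N. \<integral>\<omega>. a i * a j * (d i \<omega> * d j \<omega>) \<partial>M)"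
      by (intro sum.cong refl Bochner_Integration.integral_sum int_ij) auto
    finally show ?thesis by (simp only: sq)
  qed
  also have "\<dots> = (\<Sum>i<N. \<Sum>j<N. (if i = j then (a i)\<^sup>2 * (t / real N) else 0))"
    by (intro sum.cong refl, subst e_ij) auto
  also have "\<dots> = (\<Sum>i<N. (a i)\<^sup>2 * (t / real N))"
    by (simp add: sum.delta)
  finally show "(\<integral>\<omega>. (elem_int W t N a \<omega>)\<^sup>2 \<partial>M) = t / real N * (\<Sum>i<N. (a i)\<^sup>2)"
    by (simp add: sum_distrib_left mult.commute)
qed

lemma elem_int_isometry:
  assumes bm: "brownian_motion M W" and t: "0 < t" and N: "0 < N"
  shows "(\<integral>\<^sup>+\<omega>. ennreal ((elem_int W t N a \<omega>)\<^sup>2) \<partial>M) = ennreal (t / real N * (\<Sum>i<N. (a i)\<^sup>2))"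
  using elem_int_second_moment[OF assms]
  by (subst nn_integral_eq_integral) auto

lemma grid_cell_iff:
  fixes t s :: real and N :: nat
  assumes t: "0 < t" and N: "0 < N" and s: "0 \<le> s" "s < t"
  shows "nat \<lfloor>real N * s / t\<rfloor> < N"
    and "s \<in> {real i * (t / real N) ..< real (Suc i) * (t / real N)} \<longleftrightarrow> i = nat \<lfloor>real N * s / t\<rfloor>"
proof -
  define k where "k = nat \<lfloor>real N * s / t\<rfloor>"
  have fl: "\<lfloor>real N * s / t\<rfloor> \<ge> 0" using s t by simp
  have k1: "real k \<le> real N * s / t" and k2: "real N * s / t < real k + 1"
    unfolding k_def using fl by linarith+
  have "real N * s / t < real N" using s t N by (simp add: field_simps)
  then show "nat \<lfloor>real N * s / t\<rfloor> < N" using k1 by (simp add: k_def[symmetric])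
  have "s \<in> {real i * (t / real N) ..< real (Suc i) * (t / real N)} \<longleftrightarrow> real i \<le> real N * s / t \<and> real N * s / t < real i + 1"
    using t N by (auto simp: field_simps)
  also have "\<dots> \<longleftrightarrow> i = k" using k1 k2 by linarith
  finally show "s \<in> {real i * (t / real N) ..< real (Suc i) * (t / real N)} \<longleftrightarrow> i = nat \<lfloor>real N * s / t\<rfloor>"
    by (simp add: k_def)
qed

lemma step_fun_sq_indicator_sum:
  fixes t s :: real and N :: nat
  defines "h \<equiv> t / real N"
  assumes t: "0 < t" and N: "0 < N" and "s \<noteq> t"
  shows "ennreal ((step_fun t N a s)\<^sup>2) * indicator {0..t} s
    = (\<Sum>i<N. ennreal ((a i)\<^sup>2) * indicator {real i * h ..< real (Suc i) * h} s)"
proof (cases "0 \<le> s \<and> s < t")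
  case True
  define k where "k = nat \<lfloor>real N * s / t\<rfloor>"
  have "(\<Sum>i<N. ennreal ((a i)\<^sup>2) * indicator {real i * h ..< real (Suc i) * h} s)
      = (\<Sum>i<N. if i = k then ennreal ((a i)\<^sup>2) else 0)"
    using grid_cell_iff(2)[OF t N] True by (intro sum.cong refl) (simp add: h_def k_def indicator_def)
  also have "\<dots> = ennreal ((a k)\<^sup>2)"
    using grid_cell_iff(1)[OF t N] True by (simp add: k_def)
  finally show ?thesis using True by (simp add: step_fun_def k_def)
next
  case False
  have "s \<notin> {real i * h ..< real (Suc i) * h}" if "i < N" for i
  proof -
    have "real (Suc i) * t \<le> real N * t" using that t by (intro mult_right_mono) auto
    then have "real (Suc i) * h \<le> t" using N by (simp add: h_def field_simps)
    moreover have "0 \<le> real i * h" using t by (simp add: h_def)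
    ultimately show ?thesis using False \<open>s \<noteq> t\<close> by auto
  qed
  moreover have "indicator {0..t} s = (0::ennreal)" using False \<open>s \<noteq> t\<close> by (auto simp: indicator_def)
  ultimately show ?thesis by simp
qed

lemma step_fun_sq_integral:
  assumes t: "0 < t" and N: "0 < N"
  shows "(\<integral>\<^sup>+s\<in>{0..t}. ennreal ((step_fun t N a s)\<^sup>2) \<partial>lborel) = ennreal (t / real N * (\<Sum>i<N. (a i)\<^sup>2))"
proof -
  define h where "h = t / real N"
  have h: "0 < h" using t N by (simp add: h_def)
  have "(\<integral>\<^sup>+s\<in>{0..t}. ennreal ((step_fun t N a s)\<^sup>2) \<partial>lborel)
        = (\<integral>\<^sup>+s. (\<Sum>i<N. ennreal ((a i)\<^sup>2) * indicator {real i * h ..< real (Suc i) * h} s) \<partial>lborel)"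
    using AE_lborel_singleton[of t] unfolding h_def
    by (intro nn_integral_cong_AE) (auto elim!: eventually_mono simp: step_fun_sq_indicator_sum[OF t N])
  also have "\<dots> = (\<Sum>i<N. ennreal ((a i)\<^sup>2) * emeasure lborel {real i * h ..< real (Suc i) * h})"
    by (subst nn_integral_sum) (auto simp: nn_integral_cmult_indicator)
  also have "\<dots> = (\<Sum>i<N. ennreal ((a i)\<^sup>2 * h))"
    using h by (intro sum.cong refl) (simp add: emeasure_lborel_Ico algebra_simps ennreal_mult)
  also have "\<dots> = ennreal (\<Sum>i<N. (a i)\<^sup>2 * h)" using h by (subst sum_ennreal) auto
  finally show ?thesis by (simp add: h_def sum_distrib_left mult.commute)
qed

lemma elem_int_refine:
  assumes n: "0 < n" and m: "0 < m"
  shows "elem_int W t n c \<omega> = elem_int W t (n * m) (\<lambda>j. c (j div m)) \<omega>"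
proof -
  define f where "f j = W (real j * t / real (n * m)) \<omega>" for j
  have "elem_int W t (n * m) (\<lambda>j. c (j div m)) \<omega> = (\<Sum>j<n * m. c (j div m) * (f (Suc j) - f j))"
    by (simp add: elem_int_def f_def)
  also have "\<dots> = (\<Sum>i<n. \<Sum>j\<in>{i * m..<i * m + m}. c (j div m) * (f (Suc j) - f j))"
    by (rule sum.nat_group[symmetric])
  also have "\<dots> = (\<Sum>i<n. c i * (f (i * m + m) - f (i * m)))"
  proof (intro sum.cong refl)
    fix i assume "i \<in> {..<n}"
    have "(\<Sum>j\<in>{i * m..<i * m + m}. c (j div m) * (f (Suc j) - f j))
        = (\<Sum>j\<in>{i * m..<i * m + m}. c i * (f (Suc j) - f j))"
    proof (intro sum.cong refl)
      fix j assume "j \<in> {i * m..<i * m + m}"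
      then have "j div m = i" using m by (auto intro: div_nat_eqI simp: algebra_simps)
      then show "c (j div m) * (f (Suc j) - f j) = c i * (f (Suc j) - f j)" by simp
    qed
    also have "\<dots> = c i * (\<Sum>j\<in>{i * m..<i * m + m}. f (Suc j) - f j)"
      by (simp add: sum_distrib_left)
    also have "\<dots> = c i * (f (i * m + m) - f (i * m))"
      by (subst sum_Suc_diff') auto
    finally show "(\<Sum>j\<in>{i * m..<i * m + m}. c (j div m) * (f (Suc j) - f j)) = c i * (f (i * m + m) - f (i * m))" .
  qed
  also have "\<dots> = elem_int W t n c \<omega>"
  proof -
    have e1: "real (i * m + m) * t / real (n * m) = real (Suc i) * t / real n" for i
      using m n by (simp add: field_simps)
    have e2: "real (i * m) * t / real (n * m) = real i * t / real n" for i
      using m n by (simp add: field_simps)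
    show ?thesis by (simp add: elem_int_def f_def e1 e2 del: of_nat_add of_nat_mult)
  qed
  finally show ?thesis by simp
qed

lemma step_fun_refine:
  assumes n: "0 < n" and m: "0 < m" and t: "0 < t" and s: "0 \<le> s"
  shows "step_fun t n c s = step_fun t (n * m) (\<lambda>j. c (j div m)) s"
proof -
  have "\<lfloor>real (n * m) * s / t / real_of_int (int m)\<rfloor> = \<lfloor>real (n * m) * s / t\<rfloor> div int m"
    by (rule floor_divide_real_eq_div) simp
  moreover have "real (n * m) * s / t / real_of_int (int m) = real n * s / t"
    using m by (simp add: field_simps)
  ultimately have fl: "\<lfloor>real n * s / t\<rfloor> = \<lfloor>real (n * m) * s / t\<rfloor> div int m" by simp
  have nn: "0 \<le> \<lfloor>real (n * m) * s / t\<rfloor>" using s t by simp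
  have "nat \<lfloor>real n * s / t\<rfloor> = nat \<lfloor>real (n * m) * s / t\<rfloor> div m"
    unfolding fl using nn by (simp add: nat_div_distrib)
  then show ?thesis by (simp add: step_fun_def)
qed

lemma elem_int_diff:
  "elem_int W t N c \<omega> - elem_int W t N d \<omega> = elem_int W t N (\<lambda>j. c j - d j) \<omega>"
  by (simp add: elem_int_def sum_subtractf[symmetric] algebra_simps)

lemma elem_int_diff_isometry:
  assumes bm: "brownian_motion M W" and t: "0 < t" and n: "0 < n" and m: "0 < m"
  shows "(\<integral>\<^sup>+\<omega>. ennreal ((elem_int W t n c \<omega> - elem_int W t m d \<omega>)\<^sup>2) \<partial>M)
       = (\<integral>\<^sup>+s\<in>{0..t}. ennreal ((step_fun t n c s - step_fun t m d s)\<^sup>2) \<partial>lborel)"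
proof -
  define a where "a = (\<lambda>j. c (j div m) - d (j div n))"
  have N: "0 < n * m" using n m by simp
  have e: "elem_int W t n c \<omega> - elem_int W t m d \<omega> = elem_int W t (n * m) a \<omega>" for \<omega>
  proof -
    have "elem_int W t m d \<omega> = elem_int W t (m * n) (\<lambda>j. d (j div n)) \<omega>"
      by (rule elem_int_refine[OF m n])
    then have "elem_int W t m d \<omega> = elem_int W t (n * m) (\<lambda>j. d (j div n)) \<omega>"
      by (simp add: mult.commute)
    then show ?thesis
      using elem_int_refine[OF n m, of W t c \<omega>] elem_int_diff[of W t "n * m" "\<lambda>j. c (j div m)" \<omega> "\<lambda>j. d (j div n)"]
      by (simp add: a_def)
  qed
  have s: "step_fun t n c s - step_fun t m d s = step_fun t (n * m) a s" if "0 \<le> s" for s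
  proof -
    have "step_fun t m d s = step_fun t (m * n) (\<lambda>j. d (j div n)) s"
      by (rule step_fun_refine[OF m n t that])
    then have "step_fun t m d s = step_fun t (n * m) (\<lambda>j. d (j div n)) s"
      by (simp add: mult.commute)
    then show ?thesis using step_fun_refine[OF n m t that, of c]
      by (simp add: a_def step_fun_def)
  qed
  have "(\<integral>\<^sup>+\<omega>. ennreal ((elem_int W t n c \<omega> - elem_int W t m d \<omega>)\<^sup>2) \<partial>M)
      = (\<integral>\<^sup>+\<omega>. ennreal ((elem_int W t (n * m) a \<omega>)\<^sup>2) \<partial>M)" by (simp add: e)
  also have "\<dots> = ennreal (t / real (n * m) * (\<Sum>i<n * m. (a i)\<^sup>2))"
    by (rule elem_int_isometry[OF bm t N])
  also have "\<dots> = (\<integral>\<^sup>+s\<in>{0..t}. ennreal ((step_fun t (n * m) a s)\<^sup>2) \<partial>lborel)"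
    by (rule step_fun_sq_integral[OF t N, symmetric])
  also have "\<dots> = (\<integral>\<^sup>+s\<in>{0..t}. ennreal ((step_fun t n c s - step_fun t m d s)\<^sup>2) \<partial>lborel)"
    by (intro nn_integral_cong) (auto simp: indicator_def s)
  finally show ?thesis .
qed

section \<open>The Wiener integral of the Riemann--Liouville kernel\<close>

text \<open>The prefix \<open>rl\<close> refers to the Riemann--Liouville kernel \<open>s \<mapsto> (t - s)\<^sup>\<alpha>\<^sup>-\<^sup>1\<close> of the mild
  equation. It is approximated by its values at the left grid points, which lie below it since
  \<open>\<alpha> \<le> 1\<close>.\<close>

definition rl_nodes :: "real \<Rightarrow> real \<Rightarrow> nat \<Rightarrow> nat \<Rightarrow> real" where
  "rl_nodes \<alpha> t n i = (t - real i * t / real n) powr (\<alpha> - 1)"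

definition rl_step_error :: "real \<Rightarrow> real \<Rightarrow> nat \<Rightarrow> ennreal" where
  "rl_step_error \<alpha> t n = (\<integral>\<^sup>+s\<in>{0..t}. ennreal (((t - s) powr (\<alpha> - 1) - step_fun t n (rl_nodes \<alpha> t n) s)\<^sup>2) \<partial>lborel)"

lemma nn_integral_kernel_powr:
  assumes t: "0 \<le> t" and a: "-1 < a"
  shows "(\<integral>\<^sup>+s\<in>{0..t}. ennreal ((t - s) powr a) \<partial>lborel) = ennreal (t powr (a + 1) / (a + 1))"
proof -
  define F where "F s = ennreal ((t - s) powr a) * indicator {0..t} s" for s
  have Fm: "F \<in> borel_measurable borel" unfolding F_def by measurable
  have "(\<integral>\<^sup>+s. ennreal ((t - s) powr a) * indicator {0..t} s \<partial>lborel)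
      = (\<integral>\<^sup>+x. ennreal ((t - (t + (-1) * x)) powr a) * indicator {0..t} (t + (-1) * x) \<partial>lborel)"
    using nn_integral_real_affine[OF Fm, of "-1" t] by (simp add: F_def)
  also have "\<dots> = (\<integral>\<^sup>+x. ennreal (indicator {0..t} x * x powr a) \<partial>lborel)"
    by (intro nn_integral_cong) (auto simp: indicator_def)
  also have "\<dots> = ennreal (t powr (a + 1) / (a + 1))"
    by (rule nn_integral_has_integral_lebesgue[OF _ has_integral_powr_from_0[OF a t]]) auto
  finally show ?thesis .
qed

lemma powr_square: "0 \<le> (x::real) \<Longrightarrow> (x powr a)\<^sup>2 = x powr (2 * a)"
  unfolding power2_eq_square mult_2 by (rule powr_add[symmetric])

lemma rl_step_scale:
  assumes t: "0 < t" and n: "0 < n" and x: "0 \<le> x" "x \<le> 1"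
  shows "step_fun t n (rl_nodes \<alpha> t n) (t * x) = t powr (\<alpha> - 1) * step_fun 1 n (rl_nodes \<alpha> 1 n) x"
proof -
  define i where "i = nat \<lfloor>real n * x\<rfloor>"
  have "real n * x \<le> real n" using x by (simp add: mult_left_le)
  then have "real i \<le> real n" using x by (simp add: i_def) linarith
  then have "0 \<le> 1 - real i / real n" using n by (simp add: field_simps)
  moreover have "t - real i * t / real n = t * (1 - real i / real n)" by (simp add: field_simps)
  moreover have "real n * (t * x) / t = real n * x" using t by simp
  ultimately show ?thesis
    using t by (simp add: step_fun_def rl_nodes_def i_def powr_mult)
qed

lemma rl_step_error_scale:
  assumes t: "0 < t" and n: "0 < n"
  shows "rl_step_error \<alpha> t n = ennreal (t powr (2 * \<alpha> - 1)) * rl_step_error \<alpha> 1 n"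
proof -
  define g where "g s = ennreal (((t - s) powr (\<alpha> - 1) - step_fun t n (rl_nodes \<alpha> t n) s)\<^sup>2) * indicator {0..t} s" for s
  define h where "h s = ennreal (((1 - s) powr (\<alpha> - 1) - step_fun 1 n (rl_nodes \<alpha> 1 n) s)\<^sup>2) * indicator {0..1} s" for s
  have gm: "g \<in> borel_measurable borel" unfolding g_def by measurable
  have hm: "h \<in> borel_measurable lborel" unfolding h_def by measurable
  have pt: "g (0 + t * x) = ennreal (t powr (2 * \<alpha> - 2)) * h x" for x
  proof (cases "0 \<le> x \<and> x \<le> 1")
    case True
    have "t - t * x = t * (1 - x)" by (simp add: algebra_simps)
    then have "(t - t * x) powr (\<alpha> - 1) = t powr (\<alpha> - 1) * (1 - x) powr (\<alpha> - 1)"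
      using t True by (simp add: powr_mult)
    then have "((t - t * x) powr (\<alpha> - 1) - step_fun t n (rl_nodes \<alpha> t n) (t * x))\<^sup>2
        = (t powr (\<alpha> - 1))\<^sup>2 * ((1 - x) powr (\<alpha> - 1) - step_fun 1 n (rl_nodes \<alpha> 1 n) x)\<^sup>2"
      using rl_step_scale[OF t n] True by (simp add: power_mult_distrib[symmetric] right_diff_distrib)
    also have "(t powr (\<alpha> - 1))\<^sup>2 = t powr (2 * \<alpha> - 2)" using t by (simp add: powr_square algebra_simps)
    finally show ?thesis using True t by (simp add: g_def h_def ennreal_mult mult_left_le)
  next
    case False
    then have "t * x \<notin> {0..t}" using t by (auto simp: zero_le_mult_iff)
    then show ?thesis using False by (simp add: g_def h_def)
  qed
  have "rl_step_error \<alpha> t n = (\<integral>\<^sup>+s. g s \<partial>lborel)" by (simp add: rl_step_error_def g_def)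
  also have "\<dots> = ennreal t * (\<integral>\<^sup>+x. ennreal (t powr (2 * \<alpha> - 2)) * h x \<partial>lborel)"
    using nn_integral_real_affine[OF gm, of t 0] t by (simp only: pt) simp
  also have "\<dots> = ennreal (t * t powr (2 * \<alpha> - 2)) * (\<integral>\<^sup>+x. h x \<partial>lborel)"
    using t hm by (simp add: nn_integral_cmult ennreal_mult mult.assoc)
  also have "t * t powr (2 * \<alpha> - 2) = t powr (2 * \<alpha> - 1)"
    using t by (simp add: powr_mult_base)
  finally show ?thesis by (simp add: rl_step_error_def h_def)
qed

lemma floor_mult_div_tendsto:
  assumes s: "0 \<le> s"
  shows "(\<lambda>j. real (nat \<lfloor>real j * s\<rfloor>) / real j) \<longlonglongrightarrow> s"
proof (rule tendsto_sandwich[of "\<lambda>j. s - 1 / real j" _ _ "\<lambda>j. s"])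
  have fl: "real (nat \<lfloor>real j * s\<rfloor>) = real_of_int \<lfloor>real j * s\<rfloor>" for j
    using s by simp
  show "\<forall>\<^sub>F j in sequentially. s - 1 / real j \<le> real (nat \<lfloor>real j * s\<rfloor>) / real j"
    using eventually_gt_at_top[of 0]
  proof eventually_elim
    case (elim j)
    have "real j * s - 1 \<le> real_of_int \<lfloor>real j * s\<rfloor>" by linarith
    then have h: "real j * s - 1 \<le> real (nat \<lfloor>real j * s\<rfloor>)" by (simp only: fl)
    have "(real j * s - 1) / real j \<le> real (nat \<lfloor>real j * s\<rfloor>) / real j"
      by (rule divide_right_mono[OF h]) simp
    moreover have "(real j * s - 1) / real j = s - 1 / real j" using elim by (simp add: field_simps)
    ultimately show ?case by simp
  qed
  show "\<forall>\<^sub>F j in sequentially. real (nat \<lfloor>real j * s\<rfloor>) / real j \<le> s"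
    using eventually_gt_at_top[of 0]
  proof eventually_elim
    case (elim j)
    have "real_of_int \<lfloor>real j * s\<rfloor> \<le> real j * s" by linarith
    then have h: "real (nat \<lfloor>real j * s\<rfloor>) \<le> real j * s" by (simp only: fl)
    have "real (nat \<lfloor>real j * s\<rfloor>) / real j \<le> (real j * s) / real j"
      by (rule divide_right_mono[OF h]) simp
    moreover have "(real j * s) / real j = s" using elim by (simp add: field_simps)
    ultimately show ?case by simp
  qed
  show "(\<lambda>j. s - 1 / real j) \<longlonglongrightarrow> s"
    using tendsto_diff[OF tendsto_const[of s] lim_1_over_n] by simp
qed simp

lemma rl_step_le_kernel:
  assumes a2: "\<alpha> \<le> 1" and t: "0 < t" and s: "0 \<le> s" "s < t"
  shows "0 \<le> step_fun t n (rl_nodes \<alpha> t n) s" "step_fun t n (rl_nodes \<alpha> t n) s \<le> (t - s) powr (\<alpha> - 1)"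
proof -
  define i where "i = nat \<lfloor>real n * s / t\<rfloor>"
  have "real i * t / real n \<le> s"
  proof (cases "n = 0")
    case False
    have "real_of_int \<lfloor>real n * s / t\<rfloor> \<le> real n * s / t" by linarith
    then have "real i \<le> real n * s / t" using s t by (simp add: i_def)
    then have "real i * t \<le> real n * s" using t by (simp add: field_simps)
    then show ?thesis using False by (simp add: field_simps)
  qed (use s in simp)
  then have le: "t - s \<le> t - real i * t / real n" by simp
  have st: "step_fun t n (rl_nodes \<alpha> t n) s = (t - real i * t / real n) powr (\<alpha> - 1)"
    by (simp add: step_fun_def rl_nodes_def i_def)
  show "0 \<le> step_fun t n (rl_nodes \<alpha> t n) s" by (simp add: st)
  show "step_fun t n (rl_nodes \<alpha> t n) s \<le> (t - s) powr (\<alpha> - 1)"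
    unfolding st by (rule powr_mono2') (use a2 s le in auto)
qed

lemma rl_step_tendsto_kernel:
  assumes s: "0 \<le> s" "s < 1"
  shows "(\<lambda>n. step_fun 1 n (rl_nodes \<alpha> 1 n) s) \<longlonglongrightarrow> (1 - s) powr (\<alpha> - 1)"
proof -
  have "(\<lambda>n. 1 - real (nat \<lfloor>real n * s\<rfloor>) / real n) \<longlonglongrightarrow> 1 - s"
    using tendsto_diff[OF tendsto_const[of 1] floor_mult_div_tendsto[OF s(1)]] by simp
  then have "(\<lambda>n. (1 - real (nat \<lfloor>real n * s\<rfloor>) / real n) powr (\<alpha> - 1)) \<longlonglongrightarrow> (1 - s) powr (\<alpha> - 1)"
    using s by (intro tendsto_powr) auto
  then show ?thesis by (simp add: step_fun_def rl_nodes_def)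
qed

lemma rl_step_error_tendsto_0:
  assumes a1: "1/2 < \<alpha>" and a2: "\<alpha> \<le> 1"
  shows "(\<lambda>n. rl_step_error \<alpha> 1 n) \<longlonglongrightarrow> 0"
proof -
  define u where "u n s = ennreal (((1 - s) powr (\<alpha> - 1) - step_fun 1 n (rl_nodes \<alpha> 1 n) s)\<^sup>2) * indicator {0..1} s" for n s
  define w where "w s = ennreal ((1 - s) powr (2 * \<alpha> - 2)) * indicator {0..1} s" for s
  have "(\<lambda>n. \<integral>\<^sup>+s. u n s \<partial>lborel) \<longlonglongrightarrow> (\<integral>\<^sup>+(s::real). 0 \<partial>lborel)"
  proof (rule nn_integral_dominated_convergence[where w=w])
    show "u n \<in> borel_measurable lborel" for n unfolding u_def by measurable
    show "w \<in> borel_measurable lborel" unfolding w_def by measurable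
    show "AE s in lborel. u n s \<le> w s" for n
      using AE_lborel_singleton[of 1]
    proof eventually_elim
      case (elim s)
      show ?case
      proof (cases "0 \<le> s \<and> s \<le> 1")
        case True
        then have s: "0 \<le> s" "s < 1" using elim by auto
        have "((1 - s) powr (\<alpha> - 1) - step_fun 1 n (rl_nodes \<alpha> 1 n) s)\<^sup>2 \<le> ((1 - s) powr (\<alpha> - 1))\<^sup>2"
          using rl_step_le_kernel[OF a2 _ s] by (intro power_mono) auto
        also have "\<dots> = (1 - s) powr (2 * \<alpha> - 2)" using s by (simp add: powr_square algebra_simps)
        finally show ?thesis using True by (simp add: u_def w_def)
      qed (simp add: u_def w_def)
    qed
    show "(\<integral>\<^sup>+s. w s \<partial>lborel) < \<infinity>"
      unfolding w_def using nn_integral_kernel_powr[of 1 "2 * \<alpha> - 2"] a1 by simp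
    show "AE s in lborel. (\<lambda>n. u n s) \<longlonglongrightarrow> 0"
      using AE_lborel_singleton[of 1]
    proof eventually_elim
      case (elim s)
      show ?case
      proof (cases "0 \<le> s \<and> s \<le> 1")
        case True
        then have "(\<lambda>n. ennreal (((1 - s) powr (\<alpha> - 1) - step_fun 1 n (rl_nodes \<alpha> 1 n) s)\<^sup>2))
            \<longlonglongrightarrow> ennreal (((1 - s) powr (\<alpha> - 1) - (1 - s) powr (\<alpha> - 1))\<^sup>2)"
          using elim by (intro tendsto_ennrealI tendsto_intros rl_step_tendsto_kernel) auto
        then show ?thesis using True by (simp add: u_def)
      qed (simp add: u_def)
    qed
  qed simp
  then show ?thesis by (simp add: rl_step_error_def u_def)
qed

lemma square_diff_le: "((a::real) - b)\<^sup>2 \<le> 2 * (g - a)\<^sup>2 + 2 * (g - b)\<^sup>2"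
proof -
  have "0 \<le> ((g - a) + (g - b))\<^sup>2" by simp
  then show ?thesis by (simp add: power2_eq_square algebra_simps)
qed

lemma ennreal_square_diff_le: "ennreal (((a::real) - b)\<^sup>2) \<le> 2 * ennreal ((g - a)\<^sup>2) + 2 * ennreal ((g - b)\<^sup>2)"
proof -
  have "ennreal ((a - b)\<^sup>2) \<le> ennreal (2 * (g - a)\<^sup>2 + 2 * (g - b)\<^sup>2)"
    by (rule ennreal_leI) (rule square_diff_le)
  also have "\<dots> = 2 * ennreal ((g - a)\<^sup>2) + 2 * ennreal ((g - b)\<^sup>2)"
    by (simp add: ennreal_plus ennreal_mult)
  finally show ?thesis .
qed

lemma elem_int_diff_isometry_le:
  assumes bm: "brownian_motion M W" and t: "0 < t" and n: "0 < n" and m: "0 < m"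
    and g[measurable]: "g \<in> borel_measurable borel"
  shows "(\<integral>\<^sup>+\<omega>. ennreal ((elem_int W t n c \<omega> - elem_int W t m d \<omega>)\<^sup>2) \<partial>M)
       \<le> 2 * (\<integral>\<^sup>+s\<in>{0..t}. ennreal ((g s - step_fun t n c s)\<^sup>2) \<partial>lborel)
         + 2 * (\<integral>\<^sup>+s\<in>{0..t}. ennreal ((g s - step_fun t m d s)\<^sup>2) \<partial>lborel)"
proof -
  have "(\<integral>\<^sup>+\<omega>. ennreal ((elem_int W t n c \<omega> - elem_int W t m d \<omega>)\<^sup>2) \<partial>M)
       = (\<integral>\<^sup>+s\<in>{0..t}. ennreal ((step_fun t n c s - step_fun t m d s)\<^sup>2) \<partial>lborel)"
    by (rule elem_int_diff_isometry[OF bm t n m])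
  also have "\<dots> \<le> (\<integral>\<^sup>+s. 2 * (ennreal ((g s - step_fun t n c s)\<^sup>2) * indicator {0..t} s)
         + 2 * (ennreal ((g s - step_fun t m d s)\<^sup>2) * indicator {0..t} s) \<partial>lborel)"
  proof (intro nn_integral_mono)
    fix s
    show "ennreal ((step_fun t n c s - step_fun t m d s)\<^sup>2) * indicator {0..t} s
      \<le> 2 * (ennreal ((g s - step_fun t n c s)\<^sup>2) * indicator {0..t} s)
         + 2 * (ennreal ((g s - step_fun t m d s)\<^sup>2) * indicator {0..t} s)"
      using ennreal_square_diff_le[of "step_fun t n c s" "step_fun t m d s" "g s"]
      by (cases "s \<in> {0..t}") (auto simp: mult.assoc)
  qed
  also have "\<dots> = 2 * (\<integral>\<^sup>+s\<in>{0..t}. ennreal ((g s - step_fun t n c s)\<^sup>2) \<partial>lborel)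
         + 2 * (\<integral>\<^sup>+s\<in>{0..t}. ennreal ((g s - step_fun t m d s)\<^sup>2) \<partial>lborel)"
    by (subst nn_integral_add) (auto simp: nn_integral_cmult)
  finally show ?thesis .
qed

text \<open>The rate \<open>16\<^sup>-\<^sup>k\<close> keeps \<open>\<Sum> 2\<^sup>k E|Z\<^sub>k\<^sub>+\<^sub>1 - Z\<^sub>k|\<^sup>2\<close> finite, so the approximations converge almost surely.\<close>

definition rl_mesh :: "real \<Rightarrow> nat \<Rightarrow> nat" where
  "rl_mesh \<alpha> k = (SOME n. 0 < n \<and> rl_step_error \<alpha> 1 n \<le> ennreal ((1/16)^k))"

lemma
  assumes a1: "1/2 < \<alpha>" and a2: "\<alpha> \<le> 1"
  shows rl_mesh_pos: "0 < rl_mesh \<alpha> k"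
    and rl_mesh_step_error: "rl_step_error \<alpha> 1 (rl_mesh \<alpha> k) \<le> ennreal ((1/16)^k)"
proof -
  have "0 < ennreal ((1/16)^k)" by simp
  then have "eventually (\<lambda>n. rl_step_error \<alpha> 1 n < ennreal ((1/16)^k)) sequentially"
    using order_tendstoD(2)[OF rl_step_error_tendsto_0[OF a1 a2]] by blast
  then have "eventually (\<lambda>n. 0 < n \<and> rl_step_error \<alpha> 1 n \<le> ennreal ((1/16)^k)) sequentially"
    using eventually_gt_at_top[of 0] by eventually_elim auto
  then have "\<exists>n. 0 < n \<and> rl_step_error \<alpha> 1 n \<le> ennreal ((1/16)^k)"
    by (auto simp: eventually_sequentially)
  then have "0 < rl_mesh \<alpha> k \<and> rl_step_error \<alpha> 1 (rl_mesh \<alpha> k) \<le> ennreal ((1/16)^k)"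
    unfolding rl_mesh_def by (rule someI_ex)
  then show "0 < rl_mesh \<alpha> k" "rl_step_error \<alpha> 1 (rl_mesh \<alpha> k) \<le> ennreal ((1/16)^k)" by auto
qed

lemma rl_step_error_mesh:
  assumes a1: "1/2 < \<alpha>" and a2: "\<alpha> \<le> 1" and t: "0 < t"
  shows "rl_step_error \<alpha> t (rl_mesh \<alpha> k) \<le> ennreal (t powr (2 * \<alpha> - 1) * (1/16)^k)"
proof -
  have "rl_step_error \<alpha> t (rl_mesh \<alpha> k) = ennreal (t powr (2 * \<alpha> - 1)) * rl_step_error \<alpha> 1 (rl_mesh \<alpha> k)"
    by (rule rl_step_error_scale[OF t rl_mesh_pos[OF a1 a2]])
  also have "\<dots> \<le> ennreal (t powr (2 * \<alpha> - 1)) * ennreal ((1/16)^k)"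
    by (intro mult_left_mono rl_mesh_step_error[OF a1 a2]) auto
  finally show ?thesis by (simp add: ennreal_mult)
qed

definition rl_approx :: "(real \<Rightarrow> 'a \<Rightarrow> real) \<Rightarrow> real \<Rightarrow> real \<Rightarrow> nat \<Rightarrow> 'a \<Rightarrow> real" where
  "rl_approx W \<alpha> t k = elem_int W t (rl_mesh \<alpha> k) (rl_nodes \<alpha> t (rl_mesh \<alpha> k))"

lemma rl_approx_dist_elem_int:
  assumes bm: "brownian_motion M W" and a1: "1/2 < \<alpha>" and a2: "\<alpha> \<le> 1" and t: "0 < t" and n: "0 < n"
  shows "(\<integral>\<^sup>+\<omega>. ennreal ((rl_approx W \<alpha> t k \<omega> - elem_int W t n c \<omega>)\<^sup>2) \<partial>M)
     \<le> ennreal (2 * t powr (2 * \<alpha> - 1) * (1/16)^k)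
       + 2 * (\<integral>\<^sup>+s\<in>{0..t}. ennreal (((t - s) powr (\<alpha> - 1) - step_fun t n c s)\<^sup>2) \<partial>lborel)"
proof -
  have "(\<integral>\<^sup>+\<omega>. ennreal ((rl_approx W \<alpha> t k \<omega> - elem_int W t n c \<omega>)\<^sup>2) \<partial>M)
     \<le> 2 * rl_step_error \<alpha> t (rl_mesh \<alpha> k)
       + 2 * (\<integral>\<^sup>+s\<in>{0..t}. ennreal (((t - s) powr (\<alpha> - 1) - step_fun t n c s)\<^sup>2) \<partial>lborel)"
    unfolding rl_approx_def rl_step_error_def by (rule elem_int_diff_isometry_le[OF bm t rl_mesh_pos[OF a1 a2] n]) measurable
  also have "2 * rl_step_error \<alpha> t (rl_mesh \<alpha> k) \<le> ennreal (2 * t powr (2 * \<alpha> - 1) * (1/16)^k)"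
  proof -
    have "2 * rl_step_error \<alpha> t (rl_mesh \<alpha> k) \<le> 2 * ennreal (t powr (2 * \<alpha> - 1) * (1/16)^k)"
      by (intro mult_left_mono rl_step_error_mesh[OF a1 a2 t]) auto
    then show ?thesis by (simp add: ennreal_mult mult.assoc)
  qed
  finally show ?thesis by (simp add: add_right_mono)
qed

lemma rl_approx_cauchy:
  assumes bm: "brownian_motion M W" and a1: "1/2 < \<alpha>" and a2: "\<alpha> \<le> 1" and t: "0 < t"
  shows "(\<integral>\<^sup>+\<omega>. ennreal ((rl_approx W \<alpha> t k \<omega> - rl_approx W \<alpha> t j \<omega>)\<^sup>2) \<partial>M)
     \<le> ennreal (2 * t powr (2 * \<alpha> - 1) * ((1/16)^k + (1/16)^j))"
proof -
  have A: "(\<integral>\<^sup>+\<omega>. ennreal ((rl_approx W \<alpha> t k \<omega> - rl_approx W \<alpha> t j \<omega>)\<^sup>2) \<partial>M)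
     \<le> ennreal (2 * t powr (2 * \<alpha> - 1) * (1/16)^k) + 2 * rl_step_error \<alpha> t (rl_mesh \<alpha> j)"
    using rl_approx_dist_elem_int[OF bm a1 a2 t rl_mesh_pos[OF a1 a2], where k=k and c="rl_nodes \<alpha> t (rl_mesh \<alpha> j)"]
    unfolding rl_approx_def rl_step_error_def .
  have B: "2 * rl_step_error \<alpha> t (rl_mesh \<alpha> j) \<le> ennreal (2 * t powr (2 * \<alpha> - 1) * (1/16)^j)"
  proof -
    have "2 * rl_step_error \<alpha> t (rl_mesh \<alpha> j) \<le> 2 * ennreal (t powr (2 * \<alpha> - 1) * (1/16)^j)"
      by (intro mult_left_mono rl_step_error_mesh[OF a1 a2 t]) auto
    then show ?thesis by (simp add: ennreal_mult mult.assoc)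
  qed
  have C: "(\<integral>\<^sup>+\<omega>. ennreal ((rl_approx W \<alpha> t k \<omega> - rl_approx W \<alpha> t j \<omega>)\<^sup>2) \<partial>M)
     \<le> ennreal (2 * t powr (2 * \<alpha> - 1) * (1/16)^k) + ennreal (2 * t powr (2 * \<alpha> - 1) * (1/16)^j)"
    using A B by (meson add_left_mono order_trans)
  have D: "2 * t powr (2 * \<alpha> - 1) * ((1/16)^k + (1/16)^j)
      = 2 * t powr (2 * \<alpha> - 1) * (1/16)^k + 2 * t powr (2 * \<alpha> - 1) * (1/16)^j"
    by (simp add: distrib_left)
  show ?thesis unfolding D using C by (subst ennreal_plus) auto
qed

lemma abs_le_pow2_square_plus:
  fixes d :: real
  shows "\<bar>d\<bar> \<le> 2^k * d\<^sup>2 + (1/2)^k"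
proof (cases "\<bar>d\<bar> \<le> (1/2)^k")
  case True
  then show ?thesis by (simp add: add_increasing)
next
  case False
  then have "1 < 2^k * \<bar>d\<bar>"
    by (simp add: power_one_over field_simps)
  then have "\<bar>d\<bar> \<le> (2^k * \<bar>d\<bar>) * \<bar>d\<bar>" by (simp add: mult_le_cancel_right1)
  also have "\<dots> = 2^k * d\<^sup>2" by (simp add: power2_eq_square abs_mult_self_eq mult.assoc)
  finally show ?thesis by (simp add: add_increasing2)
qed

lemma convergent_of_summable_weighted_increments:
  fixes f :: "nat \<Rightarrow> real"
  assumes "summable (\<lambda>k. 2^k * (f (Suc k) - f k)\<^sup>2)"
  shows "convergent f"
proof -
  have "summable (\<lambda>k. 2^k * (f (Suc k) - f k)\<^sup>2 + (1/2::real)^k)"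
    by (intro summable_add assms summable_geometric) simp
  then have "summable (\<lambda>k. f (Suc k) - f k)"
    by (rule summable_comparison_test'[of _ 0]) (simp add: abs_le_pow2_square_plus)
  then have "convergent (\<lambda>k. f 0 + (\<Sum>i<k. f (Suc i) - f i))"
    by (intro convergent_add convergent_const) (use summable_LIMSEQ convergent_def in blast)
  then show ?thesis
    by (simp add: sum_lessThan_telescope)
qed

lemma AE_convergent_of_weighted_increments:
  fixes f :: "nat \<Rightarrow> 'a \<Rightarrow> real"
  assumes [measurable]: "\<And>k. f k \<in> borel_measurable M"
    and fin: "(\<Sum>k. \<integral>\<^sup>+\<omega>. ennreal (2^k * (f (Suc k) \<omega> - f k \<omega>)\<^sup>2) \<partial>M) \<noteq> \<infinity>"
  shows "AE \<omega> in M. convergent (\<lambda>k. f k \<omega>)"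
proof -
  define F where "F \<omega> = (\<Sum>k. ennreal (2^k * (f (Suc k) \<omega> - f k \<omega>)\<^sup>2))" for \<omega>
  have Fm: "F \<in> borel_measurable M" unfolding F_def by measurable
  have "(\<integral>\<^sup>+\<omega>. F \<omega> \<partial>M) \<noteq> \<infinity>"
    using fin unfolding F_def by (subst nn_integral_suminf) measurable
  then have "AE \<omega> in M. F \<omega> \<noteq> \<infinity>" by (intro nn_integral_PInf_AE Fm)
  then show ?thesis
  proof eventually_elim
    case (elim \<omega>)
    then have "summable (\<lambda>k. 2^k * (f (Suc k) \<omega> - f k \<omega>)\<^sup>2)"
      by (intro summable_suminf_not_top) (auto simp: F_def)
    then show ?case by (rule convergent_of_summable_weighted_increments)
  qed
qed

lemma rl_approx_measurable[measurable]:
  assumes bm: "brownian_motion M W" and t: "0 \<le> t"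
  shows "rl_approx W \<alpha> t k \<in> borel_measurable M"
  unfolding rl_approx_def by (rule elem_int_measurable[OF bm t])

lemma rl_approx_increment:
  assumes bm: "brownian_motion M W" and a1: "1/2 < \<alpha>" and a2: "\<alpha> \<le> 1" and t: "0 < t"
  shows "(\<integral>\<^sup>+\<omega>. ennreal (2^k * (rl_approx W \<alpha> t (Suc k) \<omega> - rl_approx W \<alpha> t k \<omega>)\<^sup>2) \<partial>M)
    \<le> ennreal (4 * t powr (2 * \<alpha> - 1) * (1/8)^k)"
proof -
  define T where "T = t powr (2 * \<alpha> - 1)"
  have T0: "0 \<le> T" by (simp add: T_def)
  have "(2::real)^k * (1/16)^k = (1/8)^k" by (simp add: power_mult_distrib[symmetric])
  then have "(2::real)^k * (2 * T * ((1/16)^(Suc k) + (1/16)^k)) = 2 * T * (17/16) * (1/8)^k"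
    by (simp add: algebra_simps)
  also have "\<dots> \<le> 4 * T * (1/8)^k" using T0 by (intro mult_right_mono) auto
  finally have le: "(2::real)^k * (2 * T * ((1/16)^(Suc k) + (1/16)^k)) \<le> 4 * T * (1/8)^k" .
  have [measurable]: "rl_approx W \<alpha> t j \<in> borel_measurable M" for j
    using rl_approx_measurable[OF bm] t by simp
  have "(\<integral>\<^sup>+\<omega>. ennreal (2^k * (rl_approx W \<alpha> t (Suc k) \<omega> - rl_approx W \<alpha> t k \<omega>)\<^sup>2) \<partial>M)
      = ennreal (2^k) * (\<integral>\<^sup>+\<omega>. ennreal ((rl_approx W \<alpha> t (Suc k) \<omega> - rl_approx W \<alpha> t k \<omega>)\<^sup>2) \<partial>M)"
    by (subst nn_integral_cmult[symmetric]) (auto simp: ennreal_mult)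
  also have "\<dots> \<le> ennreal (2^k) * ennreal (2 * T * ((1/16)^(Suc k) + (1/16)^k))"
    unfolding T_def by (intro mult_left_mono rl_approx_cauchy[OF bm a1 a2 t]) auto
  also have "\<dots> \<le> ennreal (4 * T * (1/8)^k)"
    using T0 le by (simp add: ennreal_mult[symmetric] ennreal_leI del: ennreal_numeral)
  finally show ?thesis by (simp add: T_def)
qed

lemma rl_approx_convergent_AE:
  assumes bm: "brownian_motion M W" and a1: "1/2 < \<alpha>" and a2: "\<alpha> \<le> 1" and t: "0 < t"
  shows "AE \<omega> in M. convergent (\<lambda>k. rl_approx W \<alpha> t k \<omega>)"
proof (rule AE_convergent_of_weighted_increments)
  define T where "T = t powr (2 * \<alpha> - 1)"
  show "rl_approx W \<alpha> t k \<in> borel_measurable M" for k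
    using rl_approx_measurable[OF bm] t by simp
  have "(\<lambda>k. 4 * T * (1/8::real)^k) sums (4 * T * (1 / (1 - 1/8)))"
    by (intro sums_mult geometric_sums) simp
  then have "(\<lambda>k. ennreal (4 * T * (1/8)^k)) sums ennreal (4 * T * (1 / (1 - 1/8)))"
    by (subst sums_ennreal) (simp_all add: T_def)
  then have "(\<Sum>k. ennreal (4 * T * (1/8)^k)) \<noteq> \<infinity>"
    by (simp add: sums_unique[symmetric])
  moreover have "(\<Sum>k. \<integral>\<^sup>+\<omega>. ennreal (2^k * (rl_approx W \<alpha> t (Suc k) \<omega> - rl_approx W \<alpha> t k \<omega>)\<^sup>2) \<partial>M)
      \<le> (\<Sum>k. ennreal (4 * T * (1/8)^k))"
    unfolding T_def by (intro suminf_le rl_approx_increment[OF bm a1 a2 t] summableI)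
  ultimately show "(\<Sum>k. \<integral>\<^sup>+\<omega>. ennreal (2^k * (rl_approx W \<alpha> t (Suc k) \<omega> - rl_approx W \<alpha> t k \<omega>)\<^sup>2) \<partial>M) \<noteq> \<infinity>"
    by (auto simp: top_unique)
qed

definition rl_integral :: "(real \<Rightarrow> 'a \<Rightarrow> real) \<Rightarrow> real \<Rightarrow> real \<Rightarrow> 'a \<Rightarrow> real" where
  "rl_integral W \<alpha> t \<omega> = lim (\<lambda>k. rl_approx W \<alpha> t k \<omega>)"

lemma rl_integral_measurable[measurable]:
  assumes bm: "brownian_motion M W" and t: "0 \<le> t"
  shows "rl_integral W \<alpha> t \<in> borel_measurable M"
  unfolding rl_integral_def using rl_approx_measurable[OF bm t] by measurable

lemma rl_approx_tendsto_AE: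
  assumes bm: "brownian_motion M W" and a1: "1/2 < \<alpha>" and a2: "\<alpha> \<le> 1" and t: "0 < t"
  shows "AE \<omega> in M. (\<lambda>k. rl_approx W \<alpha> t k \<omega>) \<longlonglongrightarrow> rl_integral W \<alpha> t \<omega>"
  using rl_approx_convergent_AE[OF bm a1 a2 t] by eventually_elim (simp add: rl_integral_def convergent_LIMSEQ_iff)

lemma nn_integral_square_le_of_AE_tendsto:
  assumes lim: "AE \<omega> in M. (\<lambda>k. f k \<omega>) \<longlonglongrightarrow> g \<omega>" and f[measurable]: "\<And>k. f k \<in> borel_measurable M"
    and bound: "eventually (\<lambda>k. (\<integral>\<^sup>+\<omega>. ennreal ((f k \<omega>)\<^sup>2) \<partial>M) \<le> B) sequentially"
  shows "(\<integral>\<^sup>+\<omega>. ennreal ((g \<omega>)\<^sup>2) \<partial>M) \<le> B"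
proof -
  have "(\<integral>\<^sup>+\<omega>. ennreal ((g \<omega>)\<^sup>2) \<partial>M) = (\<integral>\<^sup>+\<omega>. liminf (\<lambda>k. ennreal ((f k \<omega>)\<^sup>2)) \<partial>M)"
    using lim
  proof (intro nn_integral_cong_AE, eventually_elim)
    case (elim \<omega>)
    have "(\<lambda>k. ennreal ((f k \<omega>)\<^sup>2)) \<longlonglongrightarrow> ennreal ((g \<omega>)\<^sup>2)"
      by (intro tendsto_ennrealI tendsto_intros elim)
    then show ?case by (rule lim_imp_Liminf[OF trivial_limit_sequentially, symmetric])
  qed
  also have "\<dots> \<le> liminf (\<lambda>k. \<integral>\<^sup>+\<omega>. ennreal ((f k \<omega>)\<^sup>2) \<partial>M)"
    by (rule nn_integral_liminf) measurable
  also have "\<dots> \<le> limsup (\<lambda>k. \<integral>\<^sup>+\<omega>. ennreal ((f k \<omega>)\<^sup>2) \<partial>M)"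
    by (rule Liminf_le_Limsup) simp
  also have "\<dots> \<le> B"
    by (rule Limsup_bounded[OF bound])
  finally show ?thesis .
qed

lemma rl_integral_approx_error:
  assumes bm: "brownian_motion M W" and a1: "1/2 < \<alpha>" and a2: "\<alpha> \<le> 1" and t: "0 < t"
  shows "(\<integral>\<^sup>+\<omega>. ennreal ((rl_integral W \<alpha> t \<omega> - rl_approx W \<alpha> t k \<omega>)\<^sup>2) \<partial>M) \<le> ennreal (4 * t powr (2 * \<alpha> - 1) * (1/16)^k)"
proof (rule nn_integral_square_le_of_AE_tendsto)
  define T where "T = t powr (2 * \<alpha> - 1)"
  show "AE \<omega> in M. (\<lambda>j. rl_approx W \<alpha> t j \<omega> - rl_approx W \<alpha> t k \<omega>) \<longlonglongrightarrow> rl_integral W \<alpha> t \<omega> - rl_approx W \<alpha> t k \<omega>"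
    using rl_approx_tendsto_AE[OF bm a1 a2 t] by eventually_elim (intro tendsto_intros)
  show "(\<lambda>\<omega>. rl_approx W \<alpha> t j \<omega> - rl_approx W \<alpha> t k \<omega>) \<in> borel_measurable M" for j
    using rl_approx_measurable[OF bm, of t] t by simp
  show "\<forall>\<^sub>F j in sequentially. (\<integral>\<^sup>+\<omega>. ennreal ((rl_approx W \<alpha> t j \<omega> - rl_approx W \<alpha> t k \<omega>)\<^sup>2) \<partial>M)
      \<le> ennreal (4 * t powr (2 * \<alpha> - 1) * (1/16)^k)"
    using eventually_ge_at_top[of k]
  proof eventually_elim
    case (elim j)
    have "(1/16::real)^j \<le> (1/16)^k" using elim by (intro power_decreasing) auto
    then have "2 * T * ((1/16)^j + (1/16)^k) \<le> 4 * T * (1/16)^k"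
      by (simp add: T_def algebra_simps mult_left_mono)
    then show ?case
      using rl_approx_cauchy[OF bm a1 a2 t, of j k] unfolding T_def[symmetric]
      by (meson ennreal_leI order_trans)
  qed
qed

lemma tendsto_ennreal_geometric: "(\<lambda>k. ennreal (C * (1/16::real)^k)) \<longlonglongrightarrow> 0"
proof -
  have "(\<lambda>k. C * (1/16::real)^k) \<longlonglongrightarrow> C * 0"
    by (intro tendsto_mult tendsto_const LIMSEQ_power_zero) simp
  then show ?thesis using tendsto_ennrealI by fastforce
qed

lemma rl_integral_dist_elem_int:
  assumes bm: "brownian_motion M W" and a1: "1/2 < \<alpha>" and a2: "\<alpha> \<le> 1" and t: "0 < t" and n: "0 < n"
  shows "(\<integral>\<^sup>+\<omega>. ennreal ((rl_integral W \<alpha> t \<omega> - elem_int W t n c \<omega>)\<^sup>2) \<partial>M)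
    \<le> 4 * (\<integral>\<^sup>+s\<in>{0..t}. ennreal (((t - s) powr (\<alpha> - 1) - step_fun t n c s)\<^sup>2) \<partial>lborel)"
proof -
  define T where "T = t powr (2 * \<alpha> - 1)"
  define a where "a = (\<integral>\<^sup>+s\<in>{0..t}. ennreal (((t - s) powr (\<alpha> - 1) - step_fun t n c s)\<^sup>2) \<partial>lborel)"
  have [measurable]: "rl_approx W \<alpha> t k \<in> borel_measurable M" "rl_integral W \<alpha> t \<in> borel_measurable M"
    "elem_int W t n c \<in> borel_measurable M" for k
    using rl_approx_measurable[OF bm] rl_integral_measurable[OF bm] elem_int_measurable[OF bm] t by auto
  have bound: "(\<integral>\<^sup>+\<omega>. ennreal ((rl_integral W \<alpha> t \<omega> - elem_int W t n c \<omega>)\<^sup>2) \<partial>M)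
      \<le> 2 * ennreal (4 * T * (1/16)^k) + 2 * (ennreal (2 * T * (1/16)^k) + 2 * a)" for k
  proof -
    have "(\<integral>\<^sup>+\<omega>. ennreal ((rl_integral W \<alpha> t \<omega> - elem_int W t n c \<omega>)\<^sup>2) \<partial>M)
        \<le> (\<integral>\<^sup>+\<omega>. 2 * ennreal ((rl_integral W \<alpha> t \<omega> - rl_approx W \<alpha> t k \<omega>)\<^sup>2)
          + 2 * ennreal ((rl_approx W \<alpha> t k \<omega> - elem_int W t n c \<omega>)\<^sup>2) \<partial>M)"
      using ennreal_square_diff_le[of "rl_integral W \<alpha> t _" "elem_int W t n c _" "rl_approx W \<alpha> t k _"]
      by (intro nn_integral_mono) (simp add: power2_commute)
    also have "\<dots> = 2 * (\<integral>\<^sup>+\<omega>. ennreal ((rl_integral W \<alpha> t \<omega> - rl_approx W \<alpha> t k \<omega>)\<^sup>2) \<partial>M)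
        + 2 * (\<integral>\<^sup>+\<omega>. ennreal ((rl_approx W \<alpha> t k \<omega> - elem_int W t n c \<omega>)\<^sup>2) \<partial>M)"
      by (subst nn_integral_add) (auto simp: nn_integral_cmult)
    also have "\<dots> \<le> 2 * ennreal (4 * T * (1/16)^k) + 2 * (ennreal (2 * T * (1/16)^k) + 2 * a)"
      unfolding T_def a_def
      by (intro add_mono mult_left_mono rl_integral_approx_error[OF bm a1 a2 t] rl_approx_dist_elem_int[OF bm a1 a2 t n]) auto
    finally show ?thesis .
  qed
  have "(\<lambda>k. 2 * ennreal (4 * T * (1/16)^k) + 2 * (ennreal (2 * T * (1/16)^k) + 2 * a)) \<longlonglongrightarrow> 2 * 0 + 2 * (0 + 2 * a)"
    by (intro tendsto_add ennreal_tendsto_cmult tendsto_ennreal_geometric tendsto_const) simp_all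
  then have "(\<integral>\<^sup>+\<omega>. ennreal ((rl_integral W \<alpha> t \<omega> - elem_int W t n c \<omega>)\<^sup>2) \<partial>M) \<le> 2 * 0 + 2 * (0 + 2 * a)"
    by (rule tendsto_le[OF trivial_limit_sequentially _ tendsto_const]) (intro always_eventually allI bound)
  then show ?thesis by (simp add: a_def mult.assoc[symmetric])
qed

lemma rl_integral_is_wiener_integral:
  assumes bm: "brownian_motion M W" and a1: "1/2 < \<alpha>" and a2: "\<alpha> \<le> 1" and t: "0 < t"
  shows "is_wiener_integral M W (\<lambda>s. (t - s) powr (\<alpha> - 1)) t (rl_integral W \<alpha> t)"
  unfolding is_wiener_integral_def
proof (intro conjI allI impI)
  show "rl_integral W \<alpha> t \<in> borel_measurable M" by (rule rl_integral_measurable[OF bm]) (use t in simp)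
  fix n :: "nat \<Rightarrow> nat" and c :: "nat \<Rightarrow> nat \<Rightarrow> real"
  assume n: "\<forall>k. 0 < n k"
    and "(\<lambda>k. \<integral>\<^sup>+s\<in>{0..t}. ennreal (((t - s) powr (\<alpha> - 1) - step_fun t (n k) (c k) s)\<^sup>2) \<partial>lborel) \<longlonglongrightarrow> 0"
  then have lim: "(\<lambda>k. 4 * (\<integral>\<^sup>+s\<in>{0..t}. ennreal (((t - s) powr (\<alpha> - 1) - step_fun t (n k) (c k) s)\<^sup>2) \<partial>lborel)) \<longlonglongrightarrow> 4 * 0"
    by (intro ennreal_tendsto_cmult) simp_all
  show "(\<lambda>k. \<integral>\<^sup>+\<omega>. ennreal ((rl_integral W \<alpha> t \<omega> - elem_int W t (n k) (c k) \<omega>)\<^sup>2) \<partial>M) \<longlonglongrightarrow> 0"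
  proof (rule tendsto_sandwich[OF _ _ tendsto_const lim[unfolded mult_zero_right]])
    show "\<forall>\<^sub>F k in sequentially. (\<integral>\<^sup>+\<omega>. ennreal ((rl_integral W \<alpha> t \<omega> - elem_int W t (n k) (c k) \<omega>)\<^sup>2) \<partial>M)
        \<le> 4 * (\<integral>\<^sup>+s\<in>{0..t}. ennreal (((t - s) powr (\<alpha> - 1) - step_fun t (n k) (c k) s)\<^sup>2) \<partial>lborel)"
      using n by (intro always_eventually allI rl_integral_dist_elem_int[OF bm a1 a2 t]) simp
  qed simp
qed

lemma rl_approx_second_moment:
  assumes bm: "brownian_motion M W" and a1: "1/2 < \<alpha>" and a2: "\<alpha> \<le> 1" and t: "0 < t"
  shows "(\<integral>\<^sup>+\<omega>. ennreal ((rl_approx W \<alpha> t j \<omega>)\<^sup>2) \<partial>M) \<le> ennreal (t powr (2 * \<alpha> - 1) / (2 * \<alpha> - 1))"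
proof -
  have N: "0 < rl_mesh \<alpha> j" by (rule rl_mesh_pos[OF a1 a2])
  have "(\<integral>\<^sup>+\<omega>. ennreal ((rl_approx W \<alpha> t j \<omega>)\<^sup>2) \<partial>M)
      = (\<integral>\<^sup>+s\<in>{0..t}. ennreal ((step_fun t (rl_mesh \<alpha> j) (rl_nodes \<alpha> t (rl_mesh \<alpha> j)) s)\<^sup>2) \<partial>lborel)"
    unfolding rl_approx_def elem_int_isometry[OF bm t N] step_fun_sq_integral[OF t N] ..
  also have "\<dots> \<le> (\<integral>\<^sup>+s\<in>{0..t}. ennreal ((t - s) powr (2 * \<alpha> - 2)) \<partial>lborel)"
    using AE_lborel_singleton[of t]
  proof (intro nn_integral_mono_AE, eventually_elim)
    case (elim s)
    show ?case
    proof (cases "s \<in> {0..t}")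
      case True
      then have s: "0 \<le> s" "s < t" using elim by auto
      have "(step_fun t (rl_mesh \<alpha> j) (rl_nodes \<alpha> t (rl_mesh \<alpha> j)) s)\<^sup>2 \<le> ((t - s) powr (\<alpha> - 1))\<^sup>2"
        using rl_step_le_kernel[OF a2 t s] by (intro power_mono) auto
      also have "\<dots> = (t - s) powr (2 * \<alpha> - 2)" using s by (simp add: powr_square algebra_simps)
      finally show ?thesis using True by (simp add: ennreal_leI)
    qed simp
  qed
  also have "\<dots> = ennreal (t powr (2 * \<alpha> - 2 + 1) / (2 * \<alpha> - 2 + 1))"
    by (rule nn_integral_kernel_powr) (use t a1 in auto)
  finally show ?thesis by (simp add: algebra_simps)
qed

lemma rl_integral_second_moment:
  assumes bm: "brownian_motion M W" and a1: "1/2 < \<alpha>" and a2: "\<alpha> \<le> 1" and t: "0 < t"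
  shows "(\<integral>\<^sup>+\<omega>. ennreal ((rl_integral W \<alpha> t \<omega>)\<^sup>2) \<partial>M) \<le> ennreal (t powr (2 * \<alpha> - 1) / (2 * \<alpha> - 1))"
  using rl_approx_tendsto_AE[OF bm a1 a2 t] rl_approx_measurable[OF bm] rl_approx_second_moment[OF bm a1 a2 t] t
  by (intro nn_integral_square_le_of_AE_tendsto) auto

section \<open>Joint measurability and adaptedness\<close>

definition bm_ext :: "(real \<Rightarrow> 'a \<Rightarrow> real) \<Rightarrow> real \<Rightarrow> 'a \<Rightarrow> real" where
  "bm_ext W s \<omega> = (if 0 \<le> s then W s \<omega> else 0)"

lemma ceiling_grid_ge:
  assumes s: "0 \<le> s"
  shows "s \<le> real (nat \<lceil>real (Suc j) * s\<rceil>) / real (Suc j)"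
proof -
  have "real (Suc j) * s \<le> real_of_int \<lceil>real (Suc j) * s\<rceil>" by linarith
  then show ?thesis using s by (simp add: field_simps)
qed

lemma ceiling_grid_tendsto:
  assumes s: "0 \<le> s"
  shows "(\<lambda>j. real (nat \<lceil>real (Suc j) * s\<rceil>) / real (Suc j)) \<longlonglongrightarrow> s"
proof (rule tendsto_sandwich[of "\<lambda>j. s" _ _ "\<lambda>j. s + 1 / real (Suc j)"])
  have "real_of_int \<lceil>real (Suc j) * s\<rceil> \<le> real (Suc j) * s + 1" for j
    by linarith
  then have "real (nat \<lceil>real (Suc j) * s\<rceil>) \<le> real (Suc j) * s + 1" for j
    using s by simp
  then have "real (nat \<lceil>real (Suc j) * s\<rceil>) / real (Suc j) \<le> (real (Suc j) * s + 1) / real (Suc j)" for j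
    by (rule divide_right_mono) simp
  then have "real (nat \<lceil>real (Suc j) * s\<rceil>) / real (Suc j) \<le> s + 1 / real (Suc j)" for j
    by (simp add: add_divide_distrib)
  then show "\<forall>\<^sub>F j in sequentially. real (nat \<lceil>real (Suc j) * s\<rceil>) / real (Suc j) \<le> s + 1 / real (Suc j)"
    by simp
  show "(\<lambda>j. s + 1 / real (Suc j)) \<longlonglongrightarrow> s"
    using tendsto_add[OF tendsto_const[of s] LIMSEQ_Suc[OF lim_1_over_n]] by simp
qed (use ceiling_grid_ge[OF s] in simp_all)

text \<open>Continuity of the paths makes \<open>W\<close> the pointwise limit of processes that are piecewise constant
  in time, which gives joint measurability.\<close>
lemma bm_ext_measurable_pair:
  assumes bm: "brownian_motion M W"
  shows "(\<lambda>p. bm_ext W (fst p) (snd p)) \<in> borel_measurable (lborel \<Otimes>\<^sub>M M)"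
proof (rule borel_measurable_LIMSEQ_metric)
  define q where "q j s = real (nat \<lceil>real (Suc j) * s\<rceil>) / real (Suc j)" for j s
  show "(\<lambda>p. if 0 \<le> fst p then W (q j (fst p)) (snd p) else 0) \<in> borel_measurable (lborel \<Otimes>\<^sub>M M)" for j
  proof -
    have g: "(\<lambda>p. nat \<lceil>real (Suc j) * fst p\<rceil>) \<in> measurable (lborel \<Otimes>\<^sub>M M) (count_space UNIV)"
      by measurable
    have f: "(\<lambda>p. if (0::real) \<le> fst p then W (real i / real (Suc j)) (snd p) else 0) \<in> borel_measurable (lborel \<Otimes>\<^sub>M M)" for i
    proof -
      have [measurable]: "W (real i / real (Suc j)) \<in> borel_measurable M" by (rule bm_measurable[OF bm]) simp
      show ?thesis by measurable
    qed
    have "(\<lambda>p. (\<lambda>i p. if (0::real) \<le> fst p then W (real i / real (Suc j)) (snd p) else 0)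
              ((\<lambda>p. nat \<lceil>real (Suc j) * fst p\<rceil>) p) p) \<in> borel_measurable (lborel \<Otimes>\<^sub>M M)"
      by (rule measurable_compose_countable'[OF f g]) auto
    then show ?thesis unfolding q_def .
  qed
  fix p :: "real \<times> 'a" assume "p \<in> space (lborel \<Otimes>\<^sub>M M)"
  then have \<omega>: "snd p \<in> space M" by (auto simp: space_pair_measure)
  show "(\<lambda>j. if 0 \<le> fst p then W (q j (fst p)) (snd p) else 0) \<longlonglongrightarrow> bm_ext W (fst p) (snd p)"
  proof (cases "0 \<le> fst p")
    case True
    have "0 \<le> q j (fst p)" for j
      using ceiling_grid_ge[OF True] True unfolding q_def by (meson order_trans)
    moreover have "(\<lambda>j. q j (fst p)) \<longlonglongrightarrow> fst p"
      unfolding q_def by (rule ceiling_grid_tendsto[OF True])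
    ultimately have "(\<lambda>j. W (q j (fst p)) (snd p)) \<longlonglongrightarrow> W (fst p) (snd p)"
      using True by (intro continuous_on_tendsto_compose[OF bm_continuous[OF bm \<omega>]]) simp_all
    then show ?thesis using True by (simp add: bm_ext_def)
  qed (simp add: bm_ext_def)
qed

lemma bm_ext_measurable[measurable (raw)]:
  assumes bm: "brownian_motion M W" and f: "f \<in> borel_measurable N" and g: "g \<in> N \<rightarrow>\<^sub>M M"
  shows "(\<lambda>x. bm_ext W (f x) (g x)) \<in> borel_measurable N"
proof -
  have "(\<lambda>x. (f x, g x)) \<in> N \<rightarrow>\<^sub>M lborel \<Otimes>\<^sub>M M"
    using f g by (intro measurable_Pair) auto
  from measurable_compose[OF this bm_ext_measurable_pair[OF bm]] show ?thesis by simp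
qed

definition rl_process :: "(real \<Rightarrow> 'a \<Rightarrow> real) \<Rightarrow> real \<Rightarrow> real \<Rightarrow> 'a \<Rightarrow> real" where
  "rl_process W \<alpha> t \<omega> = (if 0 \<le> t then rl_integral W \<alpha> t \<omega> else 0)"

lemma rl_process_measurable:
  assumes bm: "brownian_motion M W"
  shows "(\<lambda>p. rl_process W \<alpha> (fst p) (snd p)) \<in> borel_measurable (lborel \<Otimes>\<^sub>M M)"
proof -
  have [measurable]: "(\<lambda>p. bm_ext W (c * fst p) (snd p)) \<in> borel_measurable (lborel \<Otimes>\<^sub>M M)" for c
    by (rule bm_ext_measurable[OF bm]) auto
  define approx where "approx k p = (\<Sum>i<rl_mesh \<alpha> k. rl_nodes \<alpha> (fst p) (rl_mesh \<alpha> k) i *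
      (bm_ext W ((real (Suc i) / real (rl_mesh \<alpha> k)) * fst p) (snd p) - bm_ext W ((real i / real (rl_mesh \<alpha> k)) * fst p) (snd p)))" for k p
  have [measurable]: "approx k \<in> borel_measurable (lborel \<Otimes>\<^sub>M M)" for k
    unfolding approx_def rl_nodes_def by measurable
  have Gm: "(\<lambda>p. if 0 \<le> fst p then lim (\<lambda>k. approx k p) else 0) \<in> borel_measurable (lborel \<Otimes>\<^sub>M M)"
    by measurable
  have eq: "rl_process W \<alpha> (fst p) (snd p) = (if 0 \<le> fst p then lim (\<lambda>k. approx k p) else 0)" for p :: "real \<times> 'a"
  proof (cases "0 \<le> fst p")
    case True
    have "approx k p = rl_approx W \<alpha> (fst p) k (snd p)" for k
      unfolding approx_def rl_approx_def elem_int_def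
    proof (intro sum.cong refl)
      fix i
      have "0 \<le> real (Suc i) / real (rl_mesh \<alpha> k) * fst p" "0 \<le> real i / real (rl_mesh \<alpha> k) * fst p"
        using True by auto
      then show "rl_nodes \<alpha> (fst p) (rl_mesh \<alpha> k) i * (bm_ext W (real (Suc i) / real (rl_mesh \<alpha> k) * fst p) (snd p)
            - bm_ext W (real i / real (rl_mesh \<alpha> k) * fst p) (snd p))
          = rl_nodes \<alpha> (fst p) (rl_mesh \<alpha> k) i * (W (real (Suc i) * fst p / real (rl_mesh \<alpha> k)) (snd p)
            - W (real i * fst p / real (rl_mesh \<alpha> k)) (snd p))"
        by (simp add: bm_ext_def)
    qed
    then show ?thesis using True by (simp add: rl_process_def rl_integral_def)
  qed (simp add: rl_process_def)
  show ?thesis by (subst measurable_cong[where g="\<lambda>p. if 0 \<le> fst p then lim (\<lambda>k. approx k p) else 0"]) (auto simp: eq Gm)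
qed

lemma aug_generator_subset_Pow: "(\<Union>s\<in>{0..t}. {W s -` B \<inter> space M | B. B \<in> sets borel}) \<union> null_sets M \<subseteq> Pow (space M)"
proof (intro Un_least UN_least subsetI)
  fix x s assume "x \<in> {W s -` B \<inter> space M | B. B \<in> sets borel}"
  then show "x \<in> Pow (space M)" by auto
next
  fix x assume "x \<in> null_sets M"
  then show "x \<in> Pow (space M)" using sets.sets_into_space[OF null_setsD2] by simp
qed

lemma aug_filtration_subset_Pow: "aug_filtration M W t \<subseteq> Pow (space M)"
  using sigma_sets_into_sp[OF aug_generator_subset_Pow[where t=t and W=W and M=M]] unfolding aug_filtration_def by blast

lemma space_aug_sigma[simp]: "space (sigma (space M) (aug_filtration M W t)) = space M"
  using aug_filtration_subset_Pow by (rule space_measure_of)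

lemma sets_aug_sigma: "sets (sigma (space M) (aug_filtration M W t)) = aug_filtration M W t"
proof -
  have "sets (sigma (space M) (aug_filtration M W t)) = sigma_sets (space M) (aug_filtration M W t)"
    using aug_filtration_subset_Pow by (rule sets_measure_of)
  also have "\<dots> = aug_filtration M W t"
    unfolding aug_filtration_def
    by (rule sigma_sets_sigma_sets_eq[OF aug_generator_subset_Pow])
  finally show ?thesis .
qed

lemma bm_adapted:
  assumes "0 \<le> s" "s \<le> t"
  shows "W s \<in> borel_measurable (sigma (space M) (aug_filtration M W t))"
proof (rule measurableI)
  fix B :: "real set" assume "B \<in> sets borel"
  then have "W s -` B \<inter> space M \<in> (\<Union>s\<in>{0..t}. {W s -` B \<inter> space M | B. B \<in> sets borel}) \<union> null_sets M"
    using assms by auto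
  then have "W s -` B \<inter> space M \<in> aug_filtration M W t"
    unfolding aug_filtration_def by (rule sigma_sets.Basic)
  then show "W s -` B \<inter> space (sigma (space M) (aug_filtration M W t)) \<in> sets (sigma (space M) (aug_filtration M W t))"
    by (simp add: sets_aug_sigma)
qed simp

lemma aug_filtration_mono:
  assumes st: "s \<le> t"
  shows "aug_filtration M W s \<subseteq> aug_filtration M W t"
  unfolding aug_filtration_def by (rule sigma_sets_mono') (use st in fastforce)

lemma aug_adapted_mono:
  fixes f :: "'a \<Rightarrow> real"
  assumes st: "s \<le> t" and f: "f \<in> borel_measurable (sigma (space M) (aug_filtration M W s))"
  shows "f \<in> borel_measurable (sigma (space M) (aug_filtration M W t))"
proof (rule measurableI)
  fix B :: "real set" assume "B \<in> sets borel"
  then have "f -` B \<inter> space M \<in> aug_filtration M W s"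
    using measurable_sets[OF f] by (simp add: sets_aug_sigma)
  then show "f -` B \<inter> space (sigma (space M) (aug_filtration M W t)) \<in> sets (sigma (space M) (aug_filtration M W t))"
    using aug_filtration_mono[OF st] by (auto simp: sets_aug_sigma)
qed simp

lemma elem_int_adapted:
  assumes t: "0 \<le> t"
  shows "elem_int W t n c \<in> borel_measurable (sigma (space M) (aug_filtration M W t))"
  unfolding elem_int_def
proof (rule borel_measurable_sum)
  fix i assume "i \<in> {..<n}"
  then have i: "Suc i \<le> n" by simp
  have le1: "real (Suc i) * t / real n \<le> t"
  proof -
    have "real (Suc i) * t \<le> real n * t" using i t by (intro mult_right_mono) auto
    then show ?thesis using i by (simp add: field_simps)
  qed
  have "real i * t / real n \<le> real (Suc i) * t / real n"
    by (intro divide_right_mono mult_right_mono) (use t in auto)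
  then have le2: "real i * t / real n \<le> t" using le1 by linarith
  have [measurable]: "W (real (Suc i) * t / real n) \<in> borel_measurable (sigma (space M) (aug_filtration M W t))"
    by (rule bm_adapted) (use le1 t in auto)
  have [measurable]: "W (real i * t / real n) \<in> borel_measurable (sigma (space M) (aug_filtration M W t))"
    by (rule bm_adapted) (use le2 t in auto)
  show "(\<lambda>\<omega>. c i * (W (real (Suc i) * t / real n) \<omega> - W (real i * t / real n) \<omega>)) \<in> borel_measurable (sigma (space M) (aug_filtration M W t))"
    by measurable
qed

lemma rl_process_adapted:
  assumes t: "0 \<le> t"
  shows "rl_process W \<alpha> t \<in> borel_measurable (sigma (space M) (aug_filtration M W t))"
proof -
  have [measurable]: "rl_approx W \<alpha> t k \<in> borel_measurable (sigma (space M) (aug_filtration M W t))" for k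
    unfolding rl_approx_def by (rule elem_int_adapted[OF t])
  show ?thesis unfolding rl_process_def rl_integral_def using t by measurable
qed

section \<open>A control with finite cost\<close>

lemma nn_integral_exponential_density: "0 < l \<Longrightarrow> (\<integral>\<^sup>+x. ennreal (exponential_density l x) \<partial>lborel) = 1"
proof -
  assume l: "0 < l"
  interpret prob_space "density lborel (exponential_density l)"
    by (rule prob_space_exponential_density[OF l])
  have "emeasure (density lborel (exponential_density l)) UNIV = 1"
    using emeasure_space_1 by simp
  then show ?thesis by (simp add: emeasure_density)
qed

lemma one_plus_le_exp:
  fixes \<mu> t :: real
  assumes mu: "0 < \<mu>" and t: "0 \<le> t"
  shows "1 + t \<le> max 1 (1 / \<mu>) * exp (\<mu> * t)"
proof -
  have "1 + t \<le> max 1 (1 / \<mu>) * (1 + \<mu> * t)"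
  proof (cases "1 \<le> \<mu>")
    case True
    then have "t \<le> \<mu> * t" using t by (simp add: mult_right_mono[of 1 \<mu> t, simplified])
    moreover have "max 1 (1 / \<mu>) = 1" using True by (simp add: max_def divide_le_eq)
    ultimately show ?thesis by simp
  next
    case False
    then have "max 1 (1 / \<mu>) = 1 / \<mu>" using mu by (simp add: max_def field_simps)
    moreover have "1 + t \<le> 1 / \<mu> * (1 + \<mu> * t)" using mu False by (simp add: field_simps)
    ultimately show ?thesis by simp
  qed
  also have "\<dots> \<le> max 1 (1 / \<mu>) * exp (\<mu> * t)"
    by (intro mult_left_mono exp_ge_add_one_self) auto
  finally show ?thesis .
qed

lemma linear_growth_le_exponential_density:
  assumes mu: "0 < \<mu>" and C: "0 \<le> C" and t: "0 \<le> t"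
  shows "exp (2 * (- \<mu>) * t) * (C * (1 + t)) \<le> C * max 1 (1 / \<mu>) / \<mu> * exponential_density \<mu> t"
proof -
  have "exp (2 * (- \<mu>) * t) * (C * (1 + t)) = C * (exp (2 * (- \<mu>) * t) * (1 + t))" by simp
  also have "\<dots> \<le> C * (exp (2 * (- \<mu>) * t) * (max 1 (1 / \<mu>) * exp (\<mu> * t)))"
    using one_plus_le_exp[OF mu t] C by (intro mult_left_mono) auto
  also have "exp (2 * (- \<mu>) * t) * (max 1 (1 / \<mu>) * exp (\<mu> * t)) = max 1 (1 / \<mu>) * exp (- (t * \<mu>))"
    by (simp add: exp_add[symmetric] algebra_simps)
  also have "C * (max 1 (1 / \<mu>) * exp (- (t * \<mu>))) = C * max 1 (1 / \<mu>) / \<mu> * exponential_density \<mu> t"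
    using t mu by (simp add: exponential_density_def)
  finally show ?thesis .
qed

lemma weighted_nn_integral_finite:
  fixes G :: "real \<Rightarrow> 'a \<Rightarrow> real"
  assumes M: "prob_space M" and mu: "0 < \<mu>" and C: "0 \<le> C"
    and Gm: "(\<lambda>p. G (fst p) (snd p)) \<in> borel_measurable (lborel \<Otimes>\<^sub>M M)" and G0: "\<And>t \<omega>. 0 \<le> G t \<omega>"
    and bnd: "\<And>t. 0 \<le> t \<Longrightarrow> (\<integral>\<^sup>+\<omega>. ennreal (G t \<omega>) \<partial>M) \<le> ennreal (C * (1 + t))"
  shows "(\<integral>\<^sup>+\<omega>. (\<integral>\<^sup>+t. ennreal (indicator {0..} t * exp (2 * (- \<mu>) * t) * G t \<omega>) \<partial>lborel) \<partial>M) < \<infinity>"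
proof -
  interpret prob_space M by (rule M)
  interpret P: pair_sigma_finite lborel M ..
  define K where "K = max 1 (1 / \<mu>)"
  have K0: "0 \<le> K" by (simp add: K_def)
  have Hm: "case_prod (\<lambda>t \<omega>. ennreal (indicator {0..} t * exp (2 * (- \<mu>) * t) * G t \<omega>)) \<in> borel_measurable (lborel \<Otimes>\<^sub>M M)"
    using Gm by (simp add: case_prod_beta') measurable
  have "(\<integral>\<^sup>+\<omega>. (\<integral>\<^sup>+t. ennreal (indicator {0..} t * exp (2 * (- \<mu>) * t) * G t \<omega>) \<partial>lborel) \<partial>M)
      = (\<integral>\<^sup>+t. (\<integral>\<^sup>+\<omega>. ennreal (indicator {0..} t * exp (2 * (- \<mu>) * t) * G t \<omega>) \<partial>M) \<partial>lborel)"
    by (rule P.Fubini'[OF Hm])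
  also have "\<dots> \<le> (\<integral>\<^sup>+t. ennreal (C * K / \<mu>) * ennreal (exponential_density \<mu> t) \<partial>lborel)"
  proof (rule nn_integral_mono)
    fix t :: real
    show "(\<integral>\<^sup>+\<omega>. ennreal (indicator {0..} t * exp (2 * (- \<mu>) * t) * G t \<omega>) \<partial>M)
        \<le> ennreal (C * K / \<mu>) * ennreal (exponential_density \<mu> t)"
    proof (cases "0 \<le> t")
      case True
      have Gm1: "G t \<in> borel_measurable M"
        using measurable_Pair2[OF Gm, of t] by simp
      have "(\<integral>\<^sup>+\<omega>. ennreal (indicator {0..} t * exp (2 * (- \<mu>) * t) * G t \<omega>) \<partial>M)
          = ennreal (exp (2 * (- \<mu>) * t)) * (\<integral>\<^sup>+\<omega>. ennreal (G t \<omega>) \<partial>M)"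
        using True G0 by (subst nn_integral_cmult[symmetric]) (auto simp: ennreal_mult Gm1)
      also have "\<dots> \<le> ennreal (exp (2 * (- \<mu>) * t)) * ennreal (C * (1 + t))"
        by (intro mult_left_mono bnd True) auto
      also have "\<dots> = ennreal (exp (2 * (- \<mu>) * t) * (C * (1 + t)))"
        using C True by (simp add: ennreal_mult)
      also have "\<dots> \<le> ennreal (C * K / \<mu> * exponential_density \<mu> t)"
        unfolding K_def by (intro ennreal_leI linear_growth_le_exponential_density mu C True)
      also have "\<dots> = ennreal (C * K / \<mu>) * ennreal (exponential_density \<mu> t)"
        using C K0 mu by (subst ennreal_mult) (auto simp: exponential_density_nonneg)
      finally show ?thesis .
    qed simp
  qed
  also have "\<dots> = ennreal (C * K / \<mu>)"
    by (subst nn_integral_cmult) (auto simp: nn_integral_exponential_density[OF mu])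
  finally show ?thesis by (simp add: le_less_trans)
qed

text \<open>The feedback control makes the drift \<open>b X(s - \<delta>) + c v(s)\<close> of the mild equation vanish, so the
  corresponding state is an explicit Wiener integral.\<close>

definition drift_free_state :: "(real \<Rightarrow> 'a \<Rightarrow> real) \<Rightarrow> real \<Rightarrow> real \<Rightarrow> real \<Rightarrow> real \<Rightarrow> 'a \<Rightarrow> real" where
  "drift_free_state W x0 \<sigma> \<alpha> t \<omega> = x0 + \<sigma> / Gamma \<alpha> * rl_process W \<alpha> t \<omega>"

definition drift_cancelling_control :: "(real \<Rightarrow> 'a \<Rightarrow> real) \<Rightarrow> real \<Rightarrow> real \<Rightarrow> real \<Rightarrow> real \<Rightarrow> real \<Rightarrow> real \<Rightarrow> real \<Rightarrow> 'a \<Rightarrow> real" where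
  "drift_cancelling_control W x0 b c \<sigma> \<alpha> \<delta> s \<omega> = - (b / c) * (if s < \<delta> then x0 else drift_free_state W x0 \<sigma> \<alpha> (s - \<delta>) \<omega>)"

lemma rl_process_0: "rl_process W \<alpha> 0 \<omega> = 0"
proof -
  have "rl_approx W \<alpha> 0 k \<omega> = 0" for k by (simp add: rl_approx_def elem_int_def)
  then show ?thesis by (simp add: rl_process_def rl_integral_def)
qed

lemma powr_le_1_plus:
  assumes t: "0 \<le> (t::real)" and p: "0 \<le> p" "p \<le> 1"
  shows "t powr p \<le> 1 + t"
proof (cases "t \<le> 1")
  case True
  then have "t powr p \<le> 1" using t p powr_mono2[of p t 1] by simp
  then show ?thesis using t by simp
next
  case False
  then have "t powr p \<le> t powr 1" using p by (intro powr_mono) auto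
  then show ?thesis using t by simp
qed

lemma rl_process_second_moment:
  assumes bm: "brownian_motion M W" and a1: "1/2 < \<alpha>" and a2: "\<alpha> \<le> 1" and t: "0 \<le> t"
  shows "(\<integral>\<^sup>+\<omega>. ennreal ((rl_process W \<alpha> t \<omega>)\<^sup>2) \<partial>M) \<le> ennreal ((1 + t) / (2 * \<alpha> - 1))"
proof (cases "t = 0")
  case True
  then show ?thesis by (simp add: rl_process_0)
next
  case False
  then have tp: "0 < t" using t by simp
  have "(\<integral>\<^sup>+\<omega>. ennreal ((rl_process W \<alpha> t \<omega>)\<^sup>2) \<partial>M) = (\<integral>\<^sup>+\<omega>. ennreal ((rl_integral W \<alpha> t \<omega>)\<^sup>2) \<partial>M)"
    using t by (simp add: rl_process_def)
  also have "\<dots> \<le> ennreal (t powr (2 * \<alpha> - 1) / (2 * \<alpha> - 1))"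
    by (rule rl_integral_second_moment[OF bm a1 a2 tp])
  also have "\<dots> \<le> ennreal ((1 + t) / (2 * \<alpha> - 1))"
    using powr_le_1_plus[OF t, of "2 * \<alpha> - 1"] a1 a2
    by (intro ennreal_leI divide_right_mono) auto
  finally show ?thesis .
qed

lemma (in prob_space) nn_integral_affine_square_le:
  assumes [measurable]: "f \<in> borel_measurable M"
  shows "(\<integral>\<^sup>+\<omega>. ennreal ((a + k * f \<omega>)\<^sup>2) \<partial>M)
    \<le> ennreal (2 * a\<^sup>2) + ennreal (2 * k\<^sup>2) * (\<integral>\<^sup>+\<omega>. ennreal ((f \<omega>)\<^sup>2) \<partial>M)"
proof -
  have "(\<integral>\<^sup>+\<omega>. ennreal ((a + k * f \<omega>)\<^sup>2) \<partial>M)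
      \<le> (\<integral>\<^sup>+\<omega>. ennreal (2 * a\<^sup>2) + ennreal (2 * k\<^sup>2) * ennreal ((f \<omega>)\<^sup>2) \<partial>M)"
    using square_diff_le[of a "- k * f _" 0]
    by (intro nn_integral_mono)
      (simp add: power_mult_distrib mult.assoc ennreal_plus[symmetric] ennreal_mult[symmetric] ennreal_leI del: ennreal_plus)
  also have "\<dots> = ennreal (2 * a\<^sup>2) + ennreal (2 * k\<^sup>2) * (\<integral>\<^sup>+\<omega>. ennreal ((f \<omega>)\<^sup>2) \<partial>M)"
    by (simp add: nn_integral_add nn_integral_cmult emeasure_space_1)
  finally show ?thesis .
qed

lemma drift_free_state_second_moment:
  assumes bm: "brownian_motion M W" and a1: "1/2 < \<alpha>" and a2: "\<alpha> \<le> 1" and t: "0 \<le> t"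
  shows "(\<integral>\<^sup>+\<omega>. ennreal ((drift_free_state W x0 \<sigma> \<alpha> t \<omega>)\<^sup>2) \<partial>M)
     \<le> ennreal ((2 * x0\<^sup>2 + 2 * (\<sigma> / Gamma \<alpha>)\<^sup>2 / (2 * \<alpha> - 1)) * (1 + t))"
proof -
  interpret prob_space M using bm_prob_space[OF bm] .
  define k where "k = \<sigma> / Gamma \<alpha>"
  have "rl_process W \<alpha> t \<in> borel_measurable M"
    using rl_integral_measurable[OF bm t] t by (simp add: rl_process_def[abs_def])
  then have "(\<integral>\<^sup>+\<omega>. ennreal ((drift_free_state W x0 \<sigma> \<alpha> t \<omega>)\<^sup>2) \<partial>M)
      \<le> ennreal (2 * x0\<^sup>2) + ennreal (2 * k\<^sup>2) * (\<integral>\<^sup>+\<omega>. ennreal ((rl_process W \<alpha> t \<omega>)\<^sup>2) \<partial>M)"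
    unfolding drift_free_state_def k_def by (rule nn_integral_affine_square_le)
  also have "\<dots> \<le> ennreal (2 * x0\<^sup>2) + ennreal (2 * k\<^sup>2) * ennreal ((1 + t) / (2 * \<alpha> - 1))"
    by (intro add_left_mono mult_left_mono rl_process_second_moment[OF bm a1 a2 t]) simp
  also have "\<dots> = ennreal (2 * x0\<^sup>2 + 2 * k\<^sup>2 * ((1 + t) / (2 * \<alpha> - 1)))"
  proof -
    have q: "0 \<le> (1 + t) / (2 * \<alpha> - 1)" using a1 t by simp
    then have "ennreal (2 * k\<^sup>2) * ennreal ((1 + t) / (2 * \<alpha> - 1)) = ennreal (2 * k\<^sup>2 * ((1 + t) / (2 * \<alpha> - 1)))"
      by (intro ennreal_mult[symmetric]) simp_all
    moreover have "0 \<le> 2 * k\<^sup>2 * ((1 + t) / (2 * \<alpha> - 1))" using q by (intro mult_nonneg_nonneg) simp_all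
    ultimately show ?thesis by (subst ennreal_plus) simp_all
  qed
  also have "\<dots> \<le> ennreal ((2 * x0\<^sup>2 + 2 * k\<^sup>2 / (2 * \<alpha> - 1)) * (1 + t))"
    using t by (intro ennreal_leI) (simp add: algebra_simps mult_le_cancel_left1)
  finally show ?thesis by (simp add: k_def)
qed

lemma drift_free_state_measurable[measurable]:
  assumes bm: "brownian_motion M W"
  shows "(\<lambda>p. drift_free_state W x0 \<sigma> \<alpha> (fst p) (snd p)) \<in> borel_measurable (lborel \<Otimes>\<^sub>M M)"
  unfolding drift_free_state_def using rl_process_measurable[OF bm] by measurable

lemma drift_free_state_shift_measurable:
  assumes bm: "brownian_motion M W"
  shows "(\<lambda>p. drift_free_state W x0 \<sigma> \<alpha> (fst p - \<delta>) (snd p)) \<in> borel_measurable (lborel \<Otimes>\<^sub>M M)"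
proof -
  have "(\<lambda>p. (fst p - \<delta>, snd p)) \<in> lborel \<Otimes>\<^sub>M M \<rightarrow>\<^sub>M lborel \<Otimes>\<^sub>M M" by measurable
  from measurable_compose[OF this drift_free_state_measurable[OF bm]] show ?thesis by simp
qed

lemma drift_cancelling_control_measurable:
  assumes bm: "brownian_motion M W"
  shows "(\<lambda>p. drift_cancelling_control W x0 b c \<sigma> \<alpha> \<delta> (fst p) (snd p)) \<in> borel_measurable (lborel \<Otimes>\<^sub>M M)"
  unfolding drift_cancelling_control_def using drift_free_state_shift_measurable[OF bm] by measurable

lemma drift_free_state_adapted:
  assumes t: "0 \<le> t"
  shows "drift_free_state W x0 \<sigma> \<alpha> t \<in> borel_measurable (sigma (space M) (aug_filtration M W t))"
  unfolding drift_free_state_def using rl_process_adapted[OF t] by measurable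

lemma drift_cancelling_control_adapted:
  assumes s: "0 \<le> s" and d: "0 \<le> \<delta>"
  shows "drift_cancelling_control W x0 b c \<sigma> \<alpha> \<delta> s \<in> borel_measurable (sigma (space M) (aug_filtration M W s))"
proof (cases "s < \<delta>")
  case True
  then have "drift_cancelling_control W x0 b c \<sigma> \<alpha> \<delta> s = (\<lambda>\<omega>. - (b / c) * x0)" by (simp add: drift_cancelling_control_def fun_eq_iff)
  then show ?thesis by simp
next
  case False
  have [measurable]: "drift_free_state W x0 \<sigma> \<alpha> (s - \<delta>) \<in> borel_measurable (sigma (space M) (aug_filtration M W s))"
    by (rule aug_adapted_mono[OF _ drift_free_state_adapted]) (use False d in auto)
  have "drift_cancelling_control W x0 b c \<sigma> \<alpha> \<delta> s = (\<lambda>\<omega>. - (b / c) * drift_free_state W x0 \<sigma> \<alpha> (s - \<delta>) \<omega>)"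
    using False by (simp add: drift_cancelling_control_def fun_eq_iff)
  then show ?thesis by simp
qed

lemma drift_cancelling_control_second_moment:
  assumes bm: "brownian_motion M W" and a1: "1/2 < \<alpha>" and a2: "\<alpha> \<le> 1" and s: "0 \<le> s" and d: "0 \<le> \<delta>"
  shows "(\<integral>\<^sup>+\<omega>. ennreal ((drift_cancelling_control W x0 b c \<sigma> \<alpha> \<delta> s \<omega>)\<^sup>2) \<partial>M)
     \<le> ennreal ((b / c)\<^sup>2 * (x0\<^sup>2 + (2 * x0\<^sup>2 + 2 * (\<sigma> / Gamma \<alpha>)\<^sup>2 / (2 * \<alpha> - 1))) * (1 + s))"
proof -
  interpret prob_space M using bm_prob_space[OF bm] .
  define CX where "CX = 2 * x0\<^sup>2 + 2 * (\<sigma> / Gamma \<alpha>)\<^sup>2 / (2 * \<alpha> - 1)"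
  have CX: "0 \<le> CX" using a1 by (simp add: CX_def)
  define D where "D \<omega> = (if s < \<delta> then x0 else drift_free_state W x0 \<sigma> \<alpha> (s - \<delta>) \<omega>)" for \<omega>
  have "drift_free_state W x0 \<sigma> \<alpha> (s - \<delta>) \<in> borel_measurable M"
    using measurable_Pair2[OF drift_free_state_measurable[OF bm], of "s - \<delta>"] by simp
  then have Dm: "D \<in> borel_measurable M" unfolding D_def by measurable
  have bound: "(\<integral>\<^sup>+\<omega>. ennreal ((D \<omega>)\<^sup>2) \<partial>M) \<le> ennreal ((x0\<^sup>2 + CX) * (1 + s))"
  proof (cases "s < \<delta>")
    case True
    have "x0\<^sup>2 \<le> (x0\<^sup>2 + CX) * (1 + s)"
      using CX s by (simp add: algebra_simps add_increasing mult_nonneg_nonneg)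
    then show ?thesis using True by (simp add: D_def emeasure_space_1 ennreal_leI)
  next
    case False
    have "CX * (1 + (s - \<delta>)) \<le> (x0\<^sup>2 + CX) * (1 + s)"
      using False s CX d by (intro mult_mono) auto
    then show ?thesis
      using False drift_free_state_second_moment[OF bm a1 a2, of "s - \<delta>" x0 \<sigma>]
      by (simp add: D_def CX_def order_trans[OF _ ennreal_leI])
  qed
  have "(\<integral>\<^sup>+\<omega>. ennreal ((drift_cancelling_control W x0 b c \<sigma> \<alpha> \<delta> s \<omega>)\<^sup>2) \<partial>M)
      = (\<integral>\<^sup>+\<omega>. ennreal ((b / c)\<^sup>2) * ennreal ((D \<omega>)\<^sup>2) \<partial>M)"
  proof (intro nn_integral_cong)
    fix \<omega>
    have "(drift_cancelling_control W x0 b c \<sigma> \<alpha> \<delta> s \<omega>)\<^sup>2 = (b / c)\<^sup>2 * (D \<omega>)\<^sup>2"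
      unfolding drift_cancelling_control_def D_def by (simp only: power_mult_distrib power2_minus)
    then show "ennreal ((drift_cancelling_control W x0 b c \<sigma> \<alpha> \<delta> s \<omega>)\<^sup>2) = ennreal ((b / c)\<^sup>2) * ennreal ((D \<omega>)\<^sup>2)"
      by (simp only: ennreal_mult[OF zero_le_power2 zero_le_power2])
  qed
  also have "\<dots> = ennreal ((b / c)\<^sup>2) * (\<integral>\<^sup>+\<omega>. ennreal ((D \<omega>)\<^sup>2) \<partial>M)"
    using Dm by (simp add: nn_integral_cmult)
  also have "\<dots> \<le> ennreal ((b / c)\<^sup>2) * ennreal ((x0\<^sup>2 + CX) * (1 + s))"
    using bound by (rule mult_left_mono) simp
  also have "\<dots> = ennreal ((b / c)\<^sup>2 * ((x0\<^sup>2 + CX) * (1 + s)))"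
    using CX s by (intro ennreal_mult[symmetric]) simp_all
  finally show ?thesis by (simp add: CX_def mult.assoc)
qed

lemma L2F_linear_growthI:
  fixes f :: "real \<Rightarrow> 'a \<Rightarrow> real"
  assumes bm: "brownian_motion M W" and mu: "0 < \<mu>" and C: "0 \<le> C"
    and fm: "(\<lambda>p. f (fst p) (snd p)) \<in> borel_measurable (lborel \<Otimes>\<^sub>M M)"
    and fa: "\<And>t. 0 \<le> t \<Longrightarrow> f t \<in> borel_measurable (sigma (space M) (aug_filtration M W t))"
    and fb: "\<And>t. 0 \<le> t \<Longrightarrow> (\<integral>\<^sup>+\<omega>. ennreal ((f t \<omega>)\<^sup>2) \<partial>M) \<le> ennreal (C * (1 + t))"
  shows "f \<in> L2F M (aug_filtration M W) (- \<mu>)"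
  unfolding L2F_def
proof (intro CollectI conjI allI impI)
  show "(\<lambda>p. indicator {0..} (fst p) * f (fst p) (snd p)) \<in> borel_measurable (lborel \<Otimes>\<^sub>M M)"
    using fm by measurable
  show "f t \<in> borel_measurable (sigma (space M) (aug_filtration M W t))" if "0 \<le> t" for t
    using fa that .
  have fm2: "(\<lambda>p. (f (fst p) (snd p))\<^sup>2) \<in> borel_measurable (lborel \<Otimes>\<^sub>M M)" using fm by measurable
  show "(\<integral>\<^sup>+\<omega>. (\<integral>\<^sup>+t. ennreal (indicator {0..} t * exp (2 * - \<mu> * t) * (f t \<omega>)\<^sup>2) \<partial>lborel) \<partial>M) < \<infinity>"
    using weighted_nn_integral_finite[OF bm_prob_space[OF bm] mu C, of "\<lambda>t \<omega>. (f t \<omega>)\<^sup>2"] fm2 fb by simp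
qed

lemma drift_free_state_L2F:
  assumes bm: "brownian_motion M W" and a1: "1/2 < \<alpha>" and a2: "\<alpha> \<le> 1" and mu: "0 < \<mu>"
  shows "drift_free_state W x0 \<sigma> \<alpha> \<in> L2F M (aug_filtration M W) (- \<mu>)"
  by (rule L2F_linear_growthI[OF bm mu _ drift_free_state_measurable[OF bm] drift_free_state_adapted drift_free_state_second_moment[OF bm a1 a2]]) (use a1 in auto)

lemma drift_cancelling_control_L2F:
  assumes bm: "brownian_motion M W" and a1: "1/2 < \<alpha>" and a2: "\<alpha> \<le> 1" and mu: "0 < \<mu>" and d: "0 \<le> \<delta>"
  shows "drift_cancelling_control W x0 b c \<sigma> \<alpha> \<delta> \<in> L2F M (aug_filtration M W) (- \<mu>)"
  by (rule L2F_linear_growthI[OF bm mu _ drift_cancelling_control_measurable[OF bm] drift_cancelling_control_adapted drift_cancelling_control_second_moment[OF bm a1 a2]]) (use a1 d in auto)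

lemma drift_free_state_is_state:
  assumes bm: "brownian_motion M W" and a1: "1/2 < \<alpha>" and a2: "\<alpha> \<le> 1" and mu: "0 < \<mu>" and d: "0 \<le> \<delta>"
    and c: "c \<noteq> 0"
  shows "is_state M W x0 b c \<sigma> \<alpha> \<delta> \<mu> (drift_cancelling_control W x0 b c \<sigma> \<alpha> \<delta>) (drift_free_state W x0 \<sigma> \<alpha>)"
proof -
  have drift: "b * (if s < \<delta> then x0 else drift_free_state W x0 \<sigma> \<alpha> (s - \<delta>) \<omega>)
      + c * drift_cancelling_control W x0 b c \<sigma> \<alpha> \<delta> s \<omega> = 0" for s \<omega>
    using c by (simp add: drift_cancelling_control_def)
  show ?thesis
    unfolding is_state_def
    by (intro conjI drift_free_state_L2F[OF bm a1 a2 mu] eventually_mono[OF AE_lborel_singleton[of 0]] impI exI)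
      (auto simp: drift drift_free_state_def rl_process_def intro!: rl_integral_is_wiener_integral[OF bm a1 a2])
qed

lemma nn_integral_lborel_pair:
  assumes M: "prob_space M" and H: "H \<in> borel_measurable (lborel \<Otimes>\<^sub>M M)"
  shows "(\<integral>\<^sup>+\<omega>. (\<integral>\<^sup>+t. H (t, \<omega>) \<partial>lborel) \<partial>M) = (\<integral>\<^sup>+p. H p \<partial>(lborel \<Otimes>\<^sub>M M))"
proof -
  interpret prob_space M by (rule M)
  interpret P: pair_sigma_finite lborel M ..
  show ?thesis using P.nn_integral_snd[OF H] by simp
qed

definition weighted_sq :: "real \<Rightarrow> (real \<Rightarrow> 'a \<Rightarrow> real) \<Rightarrow> real \<times> 'a \<Rightarrow> ennreal" where
  "weighted_sq \<beta> f p = ennreal (indicator {0..} (fst p) * exp (2 * \<beta> * fst p) * (f (fst p) (snd p))\<^sup>2)"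

lemma weighted_sq_measurable:
  assumes [measurable]: "(\<lambda>p. indicator {0..} (fst p) * f (fst p) (snd p)) \<in> borel_measurable (lborel \<Otimes>\<^sub>M M)"
  shows "weighted_sq \<beta> f \<in> borel_measurable (lborel \<Otimes>\<^sub>M M)"
proof -
  have "weighted_sq \<beta> f = (\<lambda>p. ennreal (exp (2 * \<beta> * fst p) * (indicator {0..} (fst p) * f (fst p) (snd p))\<^sup>2))"
    by (auto simp: fun_eq_iff weighted_sq_def indicator_def)
  also have "\<dots> \<in> borel_measurable (lborel \<Otimes>\<^sub>M M)" by measurable
  finally show ?thesis .
qed

lemma L2F_weighted_sq_measurable:
  "f \<in> L2F M F \<beta> \<Longrightarrow> weighted_sq \<beta> f \<in> borel_measurable (lborel \<Otimes>\<^sub>M M)"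
  by (rule weighted_sq_measurable) (simp add: L2F_def)

lemma L2F_weighted_sq_finite:
  assumes M: "prob_space M" and f: "f \<in> L2F M F \<beta>"
  shows "(\<integral>\<^sup>+p. weighted_sq \<beta> f p \<partial>(lborel \<Otimes>\<^sub>M M)) < \<infinity>"
  using f nn_integral_lborel_pair[OF M L2F_weighted_sq_measurable[OF f]]
  by (simp add: L2F_def weighted_sq_def)

definition cost_density :: "real \<Rightarrow> real \<Rightarrow> (real \<Rightarrow> 'a \<Rightarrow> real) \<Rightarrow> (real \<Rightarrow> 'a \<Rightarrow> real) \<Rightarrow> real \<times> 'a \<Rightarrow> ennreal" where
  "cost_density \<gamma> lam X u p = ennreal (indicator {0..} (fst p) * exp (- lam * fst p) * ((X (fst p) (snd p))\<^sup>2 + (u (fst p) (snd p))\<^sup>2 / \<gamma>))"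

lemma cost_density_measurable:
  assumes X: "X \<in> L2F M F \<beta>" and u: "u \<in> L2F M F \<beta>'"
  shows "cost_density \<gamma> lam X u \<in> borel_measurable (lborel \<Otimes>\<^sub>M M)"
proof -
  have [measurable]: "(\<lambda>p. indicator {0..} (fst p) * X (fst p) (snd p)) \<in> borel_measurable (lborel \<Otimes>\<^sub>M M)"
    using X by (simp add: L2F_def)
  have [measurable]: "(\<lambda>p. indicator {0..} (fst p) * u (fst p) (snd p)) \<in> borel_measurable (lborel \<Otimes>\<^sub>M M)"
    using u by (simp add: L2F_def)
  have eq: "cost_density \<gamma> lam X u = (\<lambda>p. ennreal (exp (- lam * fst p) * ((indicator {0..} (fst p) * X (fst p) (snd p))\<^sup>2
      + (indicator {0..} (fst p) * u (fst p) (snd p))\<^sup>2 / \<gamma>)))"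
    by (auto simp: fun_eq_iff cost_density_def indicator_def)
  show ?thesis unfolding eq by measurable
qed

lemma cost_eq_pair_integral:
  assumes M: "prob_space M" and X: "X \<in> L2F M F \<beta>" and u: "u \<in> L2F M F \<beta>'"
  shows "cost M \<gamma> lam X u = ennreal (1/2) * (\<integral>\<^sup>+p. cost_density \<gamma> lam X u p \<partial>(lborel \<Otimes>\<^sub>M M))"
  using nn_integral_lborel_pair[OF M cost_density_measurable[OF X u]]
  unfolding cost_def by (simp add: cost_density_def)

lemma cost_density_le:
  assumes g: "0 < \<gamma>" and lam: "2 * \<mu> \<le> lam"
  shows "cost_density \<gamma> lam X u p \<le> weighted_sq (- \<mu>) X p + ennreal (1 / \<gamma>) * weighted_sq (- \<mu>) u p"
proof -
  define w where "w = indicator {0..} (fst p) * exp (- lam * fst p)"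
  define w' where "w' = indicator {0..} (fst p) * exp (2 * (- \<mu>) * fst p)"
  obtain x y where xy: "x = X (fst p) (snd p)" "y = u (fst p) (snd p)" by blast
  have "w \<le> w'"
    using mult_right_mono[OF lam, of "fst p"] by (auto simp: w_def w'_def indicator_def)
  moreover have "0 \<le> w" by (simp add: w_def)
  ultimately have "w * (x\<^sup>2 + y\<^sup>2 / \<gamma>) \<le> w' * (x\<^sup>2 + y\<^sup>2 / \<gamma>)"
    using g by (intro mult_right_mono) simp_all
  also have "\<dots> = w' * x\<^sup>2 + 1 / \<gamma> * (w' * y\<^sup>2)"
    by (simp add: algebra_simps)
  finally have "ennreal (w * (x\<^sup>2 + y\<^sup>2 / \<gamma>)) \<le> ennreal (w' * x\<^sup>2) + ennreal (1 / \<gamma>) * ennreal (w' * y\<^sup>2)"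
    using g by (simp add: w'_def ennreal_plus[symmetric] ennreal_mult[symmetric] ennreal_leI del: ennreal_plus)
  then show ?thesis by (simp add: cost_density_def weighted_sq_def w_def w'_def xy)
qed

lemma cost_finite:
  assumes M: "prob_space M" and g: "0 < \<gamma>" and lam: "2 * \<mu> \<le> lam"
    and X: "X \<in> L2F M F (- \<mu>)" and u: "u \<in> L2F M F (- \<mu>)"
  shows "cost M \<gamma> lam X u < \<infinity>"
proof -
  have "(\<integral>\<^sup>+p. cost_density \<gamma> lam X u p \<partial>(lborel \<Otimes>\<^sub>M M))
      \<le> (\<integral>\<^sup>+p. weighted_sq (- \<mu>) X p + ennreal (1 / \<gamma>) * weighted_sq (- \<mu>) u p \<partial>(lborel \<Otimes>\<^sub>M M))"
    by (intro nn_integral_mono cost_density_le[OF g lam])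
  also have "\<dots> = (\<integral>\<^sup>+p. weighted_sq (- \<mu>) X p \<partial>(lborel \<Otimes>\<^sub>M M))
      + ennreal (1 / \<gamma>) * (\<integral>\<^sup>+p. weighted_sq (- \<mu>) u p \<partial>(lborel \<Otimes>\<^sub>M M))"
    using L2F_weighted_sq_measurable[OF X] L2F_weighted_sq_measurable[OF u]
    by (simp add: nn_integral_add nn_integral_cmult)
  also have "\<dots> < \<infinity>"
    using L2F_weighted_sq_finite[OF M X] L2F_weighted_sq_finite[OF M u] by (simp add: ennreal_mult_less_top)
  finally show ?thesis
    unfolding cost_eq_pair_integral[OF M X u] by (simp add: ennreal_mult_eq_top_iff less_top[symmetric])
qed

lemma exists_finite_cost_control:
  assumes bm: "brownian_motion M W" and a1: "1/2 < \<alpha>" and a2: "\<alpha> \<le> 1" and mu: "0 < \<mu>" and d: "0 \<le> \<delta>"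
    and g: "0 < \<gamma>" and lam: "2 * \<mu> \<le> lam" and c: "c \<noteq> 0"
  shows "\<exists>v\<in>L2F M (aug_filtration M W) (- \<mu>). J M W x0 b c \<sigma> \<alpha> \<delta> \<mu> \<gamma> lam v < \<infinity>"
proof (intro bexI)
  show "drift_cancelling_control W x0 b c \<sigma> \<alpha> \<delta> \<in> L2F M (aug_filtration M W) (- \<mu>)" by (rule drift_cancelling_control_L2F[OF bm a1 a2 mu d])
  have "J M W x0 b c \<sigma> \<alpha> \<delta> \<mu> \<gamma> lam (drift_cancelling_control W x0 b c \<sigma> \<alpha> \<delta>) \<le> cost M \<gamma> lam (drift_free_state W x0 \<sigma> \<alpha>) (drift_cancelling_control W x0 b c \<sigma> \<alpha> \<delta>)"
    unfolding J_def by (rule INF_lower) (use drift_free_state_is_state[OF bm a1 a2 mu d c] in simp)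
  also have "\<dots> < \<infinity>"
    by (rule cost_finite[OF bm_prob_space[OF bm] g lam drift_free_state_L2F[OF bm a1 a2 mu] drift_cancelling_control_L2F[OF bm a1 a2 mu d]])
  finally show "J M W x0 b c \<sigma> \<alpha> \<delta> \<mu> \<gamma> lam (drift_cancelling_control W x0 b c \<sigma> \<alpha> \<delta>) < \<infinity>" .
qed

section \<open>Midpoints of admissible pairs\<close>

lemma midpoint_square_le: "((a + b) / 2)\<^sup>2 \<le> (a::real)\<^sup>2 + b\<^sup>2"
  using square_diff_le[of a "- b" 0]
  by (simp add: power_divide) (insert zero_le_power2[of a] zero_le_power2[of b], linarith)

lemma weighted_sq_midpoint_le:
  "weighted_sq \<beta> (\<lambda>t \<omega>. (f t \<omega> + g t \<omega>) / 2) p \<le> weighted_sq \<beta> f p + weighted_sq \<beta> g p"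
proof -
  define w where "w = indicator {0..} (fst p) * exp (2 * \<beta> * fst p)"
  obtain a b where ab: "a = f (fst p) (snd p)" "b = g (fst p) (snd p)" by blast
  have w: "0 \<le> w" by (simp add: w_def)
  have "ennreal (w * ((a + b) / 2)\<^sup>2) \<le> ennreal (w * a\<^sup>2 + w * b\<^sup>2)"
    using w midpoint_square_le[of a b] by (intro ennreal_leI) (simp add: distrib_left[symmetric] mult_left_mono)
  then show ?thesis
    using w by (simp add: weighted_sq_def w_def ab mult.assoc ennreal_plus)
qed

lemma L2F_midpoint:
  assumes M: "prob_space M" and f: "f \<in> L2F M F \<beta>" and g: "g \<in> L2F M F \<beta>"
  shows "(\<lambda>t \<omega>. (f t \<omega> + g t \<omega>) / 2) \<in> L2F M F \<beta>"
proof -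
  let ?h = "\<lambda>t \<omega>. (f t \<omega> + g t \<omega>) / 2"
  have [measurable]: "(\<lambda>p. indicator {0..} (fst p) * f (fst p) (snd p)) \<in> borel_measurable (lborel \<Otimes>\<^sub>M M)"
    "(\<lambda>p. indicator {0..} (fst p) * g (fst p) (snd p)) \<in> borel_measurable (lborel \<Otimes>\<^sub>M M)"
    using f g by (simp_all add: L2F_def)
  have "(\<lambda>p. (indicator {0..} (fst p) * f (fst p) (snd p) + indicator {0..} (fst p) * g (fst p) (snd p)) / 2)
      \<in> borel_measurable (lborel \<Otimes>\<^sub>M M)" by measurable
  then have meas: "(\<lambda>p. indicator {0..} (fst p) * ?h (fst p) (snd p)) \<in> borel_measurable (lborel \<Otimes>\<^sub>M M)"
    by (simp add: algebra_simps add_divide_distrib)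
  have adapted: "?h t \<in> borel_measurable (sigma (space M) (F t))" if "0 \<le> t" for t
  proof -
    have [measurable]: "f t \<in> borel_measurable (sigma (space M) (F t))" "g t \<in> borel_measurable (sigma (space M) (F t))"
      using f g that by (auto simp: L2F_def)
    show ?thesis by measurable
  qed
  have "(\<integral>\<^sup>+\<omega>. (\<integral>\<^sup>+t. ennreal (indicator {0..} t * exp (2 * \<beta> * t) * (?h t \<omega>)\<^sup>2) \<partial>lborel) \<partial>M)
      = (\<integral>\<^sup>+p. weighted_sq \<beta> ?h p \<partial>(lborel \<Otimes>\<^sub>M M))"
    using nn_integral_lborel_pair[OF M weighted_sq_measurable[OF meas]] by (simp add: weighted_sq_def)
  also have "\<dots> \<le> (\<integral>\<^sup>+p. weighted_sq \<beta> f p + weighted_sq \<beta> g p \<partial>(lborel \<Otimes>\<^sub>M M))"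
    by (intro nn_integral_mono weighted_sq_midpoint_le)
  also have "\<dots> < \<infinity>"
    using L2F_weighted_sq_finite[OF M f] L2F_weighted_sq_finite[OF M g]
      L2F_weighted_sq_measurable[OF f] L2F_weighted_sq_measurable[OF g]
    by (simp add: nn_integral_add)
  finally show ?thesis
    using meas adapted by (simp add: L2F_def)
qed

lemma is_wiener_integral_midpoint:
  assumes bm: "brownian_motion M W" and t: "0 \<le> t"
    and Y1: "is_wiener_integral M W g t Y1" and Y2: "is_wiener_integral M W g t Y2"
  shows "is_wiener_integral M W g t (\<lambda>\<omega>. (Y1 \<omega> + Y2 \<omega>) / 2)"
  unfolding is_wiener_integral_def
proof (intro conjI allI impI)
  have [measurable]: "Y1 \<in> borel_measurable M" "Y2 \<in> borel_measurable M"
    using Y1 Y2 by (auto simp: is_wiener_integral_def)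
  show "(\<lambda>\<omega>. (Y1 \<omega> + Y2 \<omega>) / 2) \<in> borel_measurable M" by measurable
  fix n :: "nat \<Rightarrow> nat" and c :: "nat \<Rightarrow> nat \<Rightarrow> real"
  assume n: "\<forall>k. 0 < n k"
    and conv: "(\<lambda>k. \<integral>\<^sup>+s\<in>{0..t}. ennreal ((g s - step_fun t (n k) (c k) s)\<^sup>2) \<partial>lborel) \<longlonglongrightarrow> 0"
  let ?d = "\<lambda>Y k. \<integral>\<^sup>+\<omega>. ennreal ((Y \<omega> - elem_int W t (n k) (c k) \<omega>)\<^sup>2) \<partial>M"
  have lim: "(\<lambda>k. ?d Y1 k + ?d Y2 k) \<longlonglongrightarrow> 0"
    using tendsto_add[of "?d Y1" 0 _ "?d Y2" 0] Y1 Y2 n conv by (simp add: is_wiener_integral_def)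
  have [measurable]: "elem_int W t (n k) (c k) \<in> borel_measurable M" for k
    by (rule elem_int_measurable[OF bm t])
  have "?d (\<lambda>\<omega>. (Y1 \<omega> + Y2 \<omega>) / 2) k
      \<le> (\<integral>\<^sup>+\<omega>. ennreal ((Y1 \<omega> - elem_int W t (n k) (c k) \<omega>)\<^sup>2) + ennreal ((Y2 \<omega> - elem_int W t (n k) (c k) \<omega>)\<^sup>2) \<partial>M)"
    for k
  proof (intro nn_integral_mono)
    fix \<omega>
    let ?e = "elem_int W t (n k) (c k) \<omega>"
    have eq: "(Y1 \<omega> + Y2 \<omega>) / 2 - ?e = ((Y1 \<omega> - ?e) + (Y2 \<omega> - ?e)) / 2"
      by (simp add: field_simps)
    have "((Y1 \<omega> + Y2 \<omega>) / 2 - ?e)\<^sup>2 \<le> (Y1 \<omega> - ?e)\<^sup>2 + (Y2 \<omega> - ?e)\<^sup>2"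
      unfolding eq by (rule midpoint_square_le)
    then show "ennreal (((Y1 \<omega> + Y2 \<omega>) / 2 - ?e)\<^sup>2) \<le> ennreal ((Y1 \<omega> - ?e)\<^sup>2) + ennreal ((Y2 \<omega> - ?e)\<^sup>2)"
      by (simp add: ennreal_plus[symmetric] ennreal_leI del: ennreal_plus)
  qed
  then have "?d (\<lambda>\<omega>. (Y1 \<omega> + Y2 \<omega>) / 2) k \<le> ?d Y1 k + ?d Y2 k" for k
    by (simp add: nn_integral_add)
  then show "(\<lambda>k. ?d (\<lambda>\<omega>. (Y1 \<omega> + Y2 \<omega>) / 2) k) \<longlonglongrightarrow> 0"
    by (intro tendsto_sandwich[OF _ _ tendsto_const lim]) simp_all
qed

lemma local_square_integral_finite:
  fixes f :: "real \<Rightarrow> real"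
  assumes [measurable]: "f \<in> borel_measurable borel"
    and fin: "(\<integral>\<^sup>+s. ennreal (exp (2 * \<beta> * s) * (f s)\<^sup>2) \<partial>lborel) < \<infinity>" and t: "0 \<le> t"
  shows "(\<integral>\<^sup>+s\<in>{0..t}. ennreal ((f s)\<^sup>2) \<partial>lborel) < \<infinity>"
proof -
  define E where "E = exp (- 2 * \<bar>\<beta>\<bar> * t)"
  have E: "0 < E" by (simp add: E_def)
  have "(\<integral>\<^sup>+s\<in>{0..t}. ennreal ((f s)\<^sup>2) \<partial>lborel)
      \<le> (\<integral>\<^sup>+s. ennreal (1 / E) * ennreal (exp (2 * \<beta> * s) * (f s)\<^sup>2) \<partial>lborel)"
  proof (intro nn_integral_mono)
    fix s :: real
    show "ennreal ((f s)\<^sup>2) * indicator {0..t} s \<le> ennreal (1 / E) * ennreal (exp (2 * \<beta> * s) * (f s)\<^sup>2)"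
    proof (cases "s \<in> {0..t}")
      case True
      then have "- 2 * \<bar>\<beta>\<bar> * t \<le> 2 * \<beta> * s"
        by (cases "\<beta> \<ge> 0") (auto intro: order_trans[of _ 0] mult_left_mono)
      then have "E \<le> exp (2 * \<beta> * s)" by (simp add: E_def)
      then have "E * (f s)\<^sup>2 \<le> exp (2 * \<beta> * s) * (f s)\<^sup>2"
        by (intro mult_right_mono) simp_all
      then have "(f s)\<^sup>2 \<le> 1 / E * (exp (2 * \<beta> * s) * (f s)\<^sup>2)"
        using E by (simp add: field_simps)
      then show ?thesis
        using True E by (simp add: ennreal_mult[symmetric] ennreal_leI)
    qed simp
  qed
  also have "\<dots> = ennreal (1 / E) * (\<integral>\<^sup>+s. ennreal (exp (2 * \<beta> * s) * (f s)\<^sup>2) \<partial>lborel)"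
    by (rule nn_integral_cmult) measurable
  also have "\<dots> < \<infinity>" using fin by (simp add: ennreal_mult_less_top)
  finally show ?thesis .
qed

lemma nn_integral_delay_le:
  fixes f :: "real \<Rightarrow> real"
  assumes [measurable]: "f \<in> borel_measurable borel" and d: "0 \<le> \<delta>"
  shows "(\<integral>\<^sup>+s\<in>{0..t}. ennreal (if s < \<delta> then 0 else (f (s - \<delta>))\<^sup>2) \<partial>lborel)
     \<le> (\<integral>\<^sup>+s\<in>{0..t}. ennreal ((f s)\<^sup>2) \<partial>lborel)"
proof -
  define g where "g s = ennreal (if s < \<delta> then 0 else (f (s - \<delta>))\<^sup>2) * indicator {0..t} s" for s
  have [measurable]: "g \<in> borel_measurable borel" unfolding g_def by measurable
  have "(\<integral>\<^sup>+s. g s \<partial>lborel) = (\<integral>\<^sup>+x. g (\<delta> + x) \<partial>lborel)"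
    using nn_integral_real_affine[of g 1 \<delta>] by simp
  also have "\<dots> \<le> (\<integral>\<^sup>+s\<in>{0..t}. ennreal ((f s)\<^sup>2) \<partial>lborel)"
    using d by (intro nn_integral_mono) (auto simp: g_def indicator_def)
  finally show ?thesis by (simp add: g_def)
qed

lemma abs_mult_le_sum_squares: "\<bar>(k::real) * y\<bar> \<le> k\<^sup>2 + y\<^sup>2"
proof -
  have "2 * (\<bar>k\<bar> * \<bar>y\<bar>) \<le> k\<^sup>2 + y\<^sup>2"
    using sum_squares_bound[of "\<bar>k\<bar>" "\<bar>y\<bar>"] by simp
  moreover have "0 \<le> \<bar>k\<bar> * \<bar>y\<bar>" by simp
  ultimately have "\<bar>k\<bar> * \<bar>y\<bar> \<le> k\<^sup>2 + y\<^sup>2" by linarith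
  then show ?thesis by (simp add: abs_mult)
qed

lemma set_integrable_mult_of_square:
  fixes f g :: "real \<Rightarrow> real"
  assumes [measurable]: "f \<in> borel_measurable borel" "g \<in> borel_measurable borel" "A \<in> sets borel"
    and f2: "(\<integral>\<^sup>+s\<in>A. ennreal ((f s)\<^sup>2) \<partial>lborel) < \<infinity>" and g2: "(\<integral>\<^sup>+s\<in>A. ennreal ((g s)\<^sup>2) \<partial>lborel) < \<infinity>"
  shows "set_integrable lborel A (\<lambda>s. f s * g s)"
  unfolding set_integrable_def
proof (rule integrableI_bounded)
  show "(\<lambda>s. indicator A s *\<^sub>R (f s * g s)) \<in> borel_measurable lborel" by measurable
  have "(\<integral>\<^sup>+s. ennreal (norm (indicator A s *\<^sub>R (f s * g s))) \<partial>lborel)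
      \<le> (\<integral>\<^sup>+s\<in>A. ennreal ((f s)\<^sup>2) + ennreal ((g s)\<^sup>2) \<partial>lborel)"
    by (intro nn_integral_mono)
      (simp add: indicator_def abs_mult_le_sum_squares ennreal_plus[symmetric] ennreal_leI del: ennreal_plus)
  also have "\<dots> = (\<integral>\<^sup>+s\<in>A. ennreal ((f s)\<^sup>2) \<partial>lborel) + (\<integral>\<^sup>+s\<in>A. ennreal ((g s)\<^sup>2) \<partial>lborel)"
    by (rule nn_set_integral_add) measurable
  also have "\<dots> < \<infinity>" using f2 g2 by simp
  finally show "(\<integral>\<^sup>+s. ennreal (norm (indicator A s *\<^sub>R (f s * g s))) \<partial>lborel) < \<infinity>" .
qed

lemma square_integral_add_finite:
  fixes f g :: "real \<Rightarrow> real"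
  assumes [measurable]: "f \<in> borel_measurable borel" "g \<in> borel_measurable borel" "A \<in> sets borel"
    and f2: "(\<integral>\<^sup>+s\<in>A. ennreal ((f s)\<^sup>2) \<partial>lborel) < \<infinity>" and g2: "(\<integral>\<^sup>+s\<in>A. ennreal ((g s)\<^sup>2) \<partial>lborel) < \<infinity>"
  shows "(\<integral>\<^sup>+s\<in>A. ennreal ((f s + g s)\<^sup>2) \<partial>lborel) < \<infinity>"
proof -
  have "(\<integral>\<^sup>+s\<in>A. ennreal ((f s + g s)\<^sup>2) \<partial>lborel) \<le> (\<integral>\<^sup>+s\<in>A. 2 * ennreal ((f s)\<^sup>2) + 2 * ennreal ((g s)\<^sup>2) \<partial>lborel)"
    using ennreal_square_diff_le[of "f _" "- g _" 0] by (intro nn_integral_mono) (simp add: indicator_def)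
  also have "\<dots> = 2 * (\<integral>\<^sup>+s\<in>A. ennreal ((f s)\<^sup>2) \<partial>lborel) + 2 * (\<integral>\<^sup>+s\<in>A. ennreal ((g s)\<^sup>2) \<partial>lborel)"
    by (subst nn_set_integral_add) (simp_all add: nn_integral_cmult mult.assoc del: ennreal_numeral)
  also have "\<dots> < \<infinity>" using f2 g2 by (simp add: ennreal_mult_less_top)
  finally show ?thesis .
qed

lemma square_integral_cmult_finite:
  fixes f :: "real \<Rightarrow> real"
  assumes [measurable]: "f \<in> borel_measurable borel" "A \<in> sets borel"
    and f2: "(\<integral>\<^sup>+s\<in>A. ennreal ((f s)\<^sup>2) \<partial>lborel) < \<infinity>"
  shows "(\<integral>\<^sup>+s\<in>A. ennreal ((a * f s)\<^sup>2) \<partial>lborel) < \<infinity>"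
proof -
  have "(\<integral>\<^sup>+s\<in>A. ennreal ((a * f s)\<^sup>2) \<partial>lborel) = (\<integral>\<^sup>+s. ennreal (a\<^sup>2) * (ennreal ((f s)\<^sup>2) * indicator A s) \<partial>lborel)"
    by (intro nn_integral_cong) (simp add: power_mult_distrib ennreal_mult mult.assoc)
  also have "\<dots> = ennreal (a\<^sup>2) * (\<integral>\<^sup>+s\<in>A. ennreal ((f s)\<^sup>2) \<partial>lborel)"
    by (rule nn_integral_cmult) measurable
  also have "\<dots> < \<infinity>" using f2 by (simp add: ennreal_mult_less_top)
  finally show ?thesis .
qed

lemma kernel_square_integral_finite:
  assumes a1: "1/2 < \<alpha>" and t: "0 \<le> t"
  shows "(\<integral>\<^sup>+s\<in>{0..t}. ennreal (((t - s) powr (\<alpha> - 1))\<^sup>2) \<partial>lborel) < \<infinity>"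
proof -
  have "(\<integral>\<^sup>+s\<in>{0..t}. ennreal (((t - s) powr (\<alpha> - 1))\<^sup>2) \<partial>lborel)
      = (\<integral>\<^sup>+s\<in>{0..t}. ennreal ((t - s) powr (2 * \<alpha> - 2)) \<partial>lborel)"
    by (intro nn_integral_cong) (simp add: indicator_def powr_square algebra_simps)
  also have "\<dots> = ennreal (t powr (2 * \<alpha> - 2 + 1) / (2 * \<alpha> - 2 + 1))"
    by (rule nn_integral_kernel_powr) (use t a1 in auto)
  finally show ?thesis by simp
qed

lemma delayed_square_integral_finite:
  fixes f :: "real \<Rightarrow> real"
  assumes [measurable]: "f \<in> borel_measurable borel" and d: "0 \<le> \<delta>" and t: "0 \<le> t"
    and f2: "(\<integral>\<^sup>+s\<in>{0..t}. ennreal ((f s)\<^sup>2) \<partial>lborel) < \<infinity>"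
  shows "(\<integral>\<^sup>+s\<in>{0..t}. ennreal ((if s < \<delta> then x0 else f (s - \<delta>))\<^sup>2) \<partial>lborel) < \<infinity>"
proof -
  have split: "(if s < \<delta> then x0 else f (s - \<delta>)) = (if s < \<delta> then x0 else 0) + (if s < \<delta> then 0 else f (s - \<delta>))" for s
    by simp
  have "(\<integral>\<^sup>+s\<in>{0..t}. ennreal ((if s < \<delta> then x0 else 0)\<^sup>2) \<partial>lborel) \<le> (\<integral>\<^sup>+s\<in>{0..t}. ennreal (x0\<^sup>2) \<partial>lborel)"
    by (intro nn_integral_mono) (simp add: indicator_def)
  also have "\<dots> < \<infinity>" using t by (simp add: nn_integral_cmult_indicator ennreal_mult_less_top)
  finally have const: "(\<integral>\<^sup>+s\<in>{0..t}. ennreal ((if s < \<delta> then x0 else 0)\<^sup>2) \<partial>lborel) < \<infinity>" .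
  have "(\<integral>\<^sup>+s\<in>{0..t}. ennreal ((if s < \<delta> then 0 else f (s - \<delta>))\<^sup>2) \<partial>lborel)
      = (\<integral>\<^sup>+s\<in>{0..t}. ennreal (if s < \<delta> then 0 else (f (s - \<delta>))\<^sup>2) \<partial>lborel)"
    by (intro nn_integral_cong) simp
  also have "\<dots> < \<infinity>" using nn_integral_delay_le[of f \<delta> t] d f2 by simp
  finally show ?thesis
    unfolding split using const by (intro square_integral_add_finite) simp_all
qed

text \<open>The integrand of the mild equation is a product of two \<open>L\<^sup>2(0,t)\<close> functions: the kernel, which is
  square integrable exactly because \<open>\<alpha> > 1/2\<close>, and the delayed drift.\<close>
lemma mild_integrand_integrable:
  fixes f v :: "real \<Rightarrow> real"
  assumes [measurable]: "f \<in> borel_measurable borel" "v \<in> borel_measurable borel"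
    and f2: "(\<integral>\<^sup>+s\<in>{0..t}. ennreal ((f s)\<^sup>2) \<partial>lborel) < \<infinity>"
    and v2: "(\<integral>\<^sup>+s\<in>{0..t}. ennreal ((v s)\<^sup>2) \<partial>lborel) < \<infinity>"
    and a1: "1/2 < \<alpha>" and t: "0 \<le> t" and d: "0 \<le> \<delta>"
  shows "set_integrable lborel {0..t} (\<lambda>s. (t - s) powr (\<alpha> - 1) * (b * (if s < \<delta> then x0 else f (s - \<delta>)) + c * v s))"
proof (rule set_integrable_mult_of_square)
  show "(\<integral>\<^sup>+s\<in>{0..t}. ennreal (((t - s) powr (\<alpha> - 1))\<^sup>2) \<partial>lborel) < \<infinity>"
    by (rule kernel_square_integral_finite[OF a1 t])
  show "(\<integral>\<^sup>+s\<in>{0..t}. ennreal ((b * (if s < \<delta> then x0 else f (s - \<delta>)) + c * v s)\<^sup>2) \<partial>lborel) < \<infinity>"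
    using delayed_square_integral_finite[OF _ d t f2, of x0] v2
    by (intro square_integral_add_finite square_integral_cmult_finite) simp_all
qed simp_all

lemma L2F_section_measurable:
  assumes f: "f \<in> L2F M F \<beta>" and \<omega>: "\<omega> \<in> space M"
  shows "(\<lambda>s. indicator {0..} s * f s \<omega>) \<in> borel_measurable borel"
proof -
  have "(\<lambda>p. indicator {0..} (fst p) * f (fst p) (snd p)) \<in> borel_measurable (lborel \<Otimes>\<^sub>M M)"
    using f by (simp add: L2F_def)
  from measurable_Pair1[OF this \<omega>] show ?thesis by simp
qed

lemma L2F_AE_section_finite:
  assumes M: "prob_space M" and f: "f \<in> L2F M F \<beta>"
  shows "AE \<omega> in M. (\<integral>\<^sup>+s. ennreal (exp (2 * \<beta> * s) * (indicator {0..} s * f s \<omega>)\<^sup>2) \<partial>lborel) < \<infinity>"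
proof -
  interpret prob_space M by (rule M)
  define H where "H = weighted_sq \<beta> f"
  have Hm: "H \<in> borel_measurable (lborel \<Otimes>\<^sub>M M)" unfolding H_def by (rule L2F_weighted_sq_measurable[OF f])
  have Hs: "(\<lambda>(x, y). H (y, x)) \<in> borel_measurable (M \<Otimes>\<^sub>M lborel)"
    by (rule measurable_pair_swap[OF Hm])
  have m: "(\<lambda>\<omega>. \<integral>\<^sup>+s. H (s, \<omega>) \<partial>lborel) \<in> borel_measurable M"
    using lborel.borel_measurable_nn_integral_fst[OF Hs] by simp
  have fin: "(\<integral>\<^sup>+\<omega>. (\<integral>\<^sup>+s. H (s, \<omega>) \<partial>lborel) \<partial>M) \<noteq> \<infinity>"
    using f by (simp add: L2F_def H_def weighted_sq_def less_top)
  have "AE \<omega> in M. (\<integral>\<^sup>+s. H (s, \<omega>) \<partial>lborel) \<noteq> \<infinity>"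
    by (rule nn_integral_PInf_AE[OF m fin])
  moreover have "H (s, \<omega>) = ennreal (exp (2 * \<beta> * s) * (indicator {0..} s * f s \<omega>)\<^sup>2)" for s \<omega>
    by (simp add: H_def weighted_sq_def indicator_def)
  ultimately show ?thesis by (simp add: top.not_eq_extremum)
qed

lemma mild_integrand_integrable_AE:
  assumes M: "prob_space M" and X: "X \<in> L2F M F (- \<mu>)" and u: "u \<in> L2F M F (- \<mu>)"
    and a1: "1/2 < \<alpha>" and t: "0 \<le> t" and d: "0 \<le> \<delta>"
  shows "AE \<omega> in M. set_integrable lborel {0..t}
      (\<lambda>s. (t - s) powr (\<alpha> - 1) * (b * (if s < \<delta> then x0 else X (s - \<delta>) \<omega>) + c * u s \<omega>))"
  using L2F_AE_section_finite[OF M X] L2F_AE_section_finite[OF M u] AE_space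
proof eventually_elim
  case (elim \<omega>)
  define f where "f s = indicator {0..} s * X s \<omega>" for s
  define v where "v s = indicator {0..} s * u s \<omega>" for s
  have fm[measurable]: "f \<in> borel_measurable borel"
    unfolding f_def by (rule L2F_section_measurable[OF X elim(3)])
  have vm[measurable]: "v \<in> borel_measurable borel"
    unfolding v_def by (rule L2F_section_measurable[OF u elim(3)])
  have "(\<integral>\<^sup>+s\<in>{0..t}. ennreal ((f s)\<^sup>2) \<partial>lborel) < \<infinity>"
    using elim(1) by (intro local_square_integral_finite[OF fm _ t, of "- \<mu>"]) (simp add: f_def)
  moreover have "(\<integral>\<^sup>+s\<in>{0..t}. ennreal ((v s)\<^sup>2) \<partial>lborel) < \<infinity>"
    using elim(2) by (intro local_square_integral_finite[OF vm _ t, of "- \<mu>"]) (simp add: v_def)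
  ultimately have "set_integrable lborel {0..t} (\<lambda>s. (t - s) powr (\<alpha> - 1) * (b * (if s < \<delta> then x0 else f (s - \<delta>)) + c * v s))"
    by (intro mild_integrand_integrable[OF _ _ _ _ a1 t d]) simp_all
  moreover have "set_integrable lborel {0..t} (\<lambda>s. (t - s) powr (\<alpha> - 1) * (b * (if s < \<delta> then x0 else f (s - \<delta>)) + c * v s))
      = set_integrable lborel {0..t} (\<lambda>s. (t - s) powr (\<alpha> - 1) * (b * (if s < \<delta> then x0 else X (s - \<delta>) \<omega>) + c * u s \<omega>))"
    by (rule set_integrable_cong) (auto simp: f_def v_def)
  ultimately show ?case by simp
qed

lemma set_integral_midpoint:
  fixes F1 F2 :: "real \<Rightarrow> real"
  assumes "set_integrable lborel A F1" "set_integrable lborel A F2"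
  shows "(\<integral>s\<in>A. (F1 s + F2 s) / 2 \<partial>lborel) = ((\<integral>s\<in>A. F1 s \<partial>lborel) + (\<integral>s\<in>A. F2 s \<partial>lborel)) / 2"
proof -
  have "(\<integral>s\<in>A. (F1 s + F2 s) / 2 \<partial>lborel) = (\<integral>s\<in>A. (F1 s + F2 s) \<partial>lborel) / 2"
    unfolding set_lebesgue_integral_def
    by (simp add: indicator_def if_distrib[of "\<lambda>x. x / 2"] cong: if_cong)
  also have "\<dots> = ((\<integral>s\<in>A. F1 s \<partial>lborel) + (\<integral>s\<in>A. F2 s \<partial>lborel)) / 2"
    using set_integral_add(2)[OF assms] by simp
  finally show ?thesis .
qed

lemma mild_equation_midpoint:
  fixes X1 X2 u1 u2 :: "real \<Rightarrow> real"
  assumes int1: "set_integrable lborel {0..t} (\<lambda>s. (t - s) powr (\<alpha> - 1) * (b * (if s < \<delta> then x0 else X1 (s - \<delta>)) + c * u1 s))"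
    and int2: "set_integrable lborel {0..t} (\<lambda>s. (t - s) powr (\<alpha> - 1) * (b * (if s < \<delta> then x0 else X2 (s - \<delta>)) + c * u2 s))"
    and eq1: "x1 = x0 + 1 / Gamma \<alpha> * (\<integral>s\<in>{0..t}. (t - s) powr (\<alpha> - 1)
      * (b * (if s < \<delta> then x0 else X1 (s - \<delta>)) + c * u1 s) \<partial>lborel) + \<sigma> / Gamma \<alpha> * y1"
    and eq2: "x2 = x0 + 1 / Gamma \<alpha> * (\<integral>s\<in>{0..t}. (t - s) powr (\<alpha> - 1)
      * (b * (if s < \<delta> then x0 else X2 (s - \<delta>)) + c * u2 s) \<partial>lborel) + \<sigma> / Gamma \<alpha> * y2"
  shows "(x1 + x2) / 2 = x0 + 1 / Gamma \<alpha> * (\<integral>s\<in>{0..t}. (t - s) powr (\<alpha> - 1)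
      * (b * (if s < \<delta> then x0 else (X1 (s - \<delta>) + X2 (s - \<delta>)) / 2) + c * ((u1 s + u2 s) / 2)) \<partial>lborel)
      + \<sigma> / Gamma \<alpha> * ((y1 + y2) / 2)"
proof -
  have "(t - s) powr (\<alpha> - 1) * (b * (if s < \<delta> then x0 else (X1 (s - \<delta>) + X2 (s - \<delta>)) / 2) + c * ((u1 s + u2 s) / 2))
      = ((t - s) powr (\<alpha> - 1) * (b * (if s < \<delta> then x0 else X1 (s - \<delta>)) + c * u1 s)
        + (t - s) powr (\<alpha> - 1) * (b * (if s < \<delta> then x0 else X2 (s - \<delta>)) + c * u2 s)) / 2" for s
    by (simp add: field_simps)
  then have I: "(\<integral>s\<in>{0..t}. (t - s) powr (\<alpha> - 1)
      * (b * (if s < \<delta> then x0 else (X1 (s - \<delta>) + X2 (s - \<delta>)) / 2) + c * ((u1 s + u2 s) / 2)) \<partial>lborel)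
    = ((\<integral>s\<in>{0..t}. (t - s) powr (\<alpha> - 1) * (b * (if s < \<delta> then x0 else X1 (s - \<delta>)) + c * u1 s) \<partial>lborel)
      + (\<integral>s\<in>{0..t}. (t - s) powr (\<alpha> - 1) * (b * (if s < \<delta> then x0 else X2 (s - \<delta>)) + c * u2 s) \<partial>lborel)) / 2"
    by (simp only: set_integral_midpoint[OF int1 int2])
  have "((x0 + g * I1 + k * y1) + (x0 + g * I2 + k * y2)) / 2 = x0 + g * ((I1 + I2) / 2) + k * ((y1 + y2) / 2)"
    for g k I1 I2 :: real
    by (simp add: field_simps)
  then show ?thesis
    unfolding eq1 eq2 I .
qed

lemma is_state_midpoint:
  assumes bm: "brownian_motion M W" and a1: "1/2 < \<alpha>" and d: "0 \<le> \<delta>"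
    and S1: "is_state M W x0 b c \<sigma> \<alpha> \<delta> \<mu> u1 X1" and S2: "is_state M W x0 b c \<sigma> \<alpha> \<delta> \<mu> u2 X2"
    and u1: "u1 \<in> L2F M (aug_filtration M W) (- \<mu>)" and u2: "u2 \<in> L2F M (aug_filtration M W) (- \<mu>)"
  shows "is_state M W x0 b c \<sigma> \<alpha> \<delta> \<mu> (\<lambda>t \<omega>. (u1 t \<omega> + u2 t \<omega>) / 2) (\<lambda>t \<omega>. (X1 t \<omega> + X2 t \<omega>) / 2)"
proof -
  have M: "prob_space M" by (rule bm_prob_space[OF bm])
  have X1: "X1 \<in> L2F M (aug_filtration M W) (- \<mu>)" and X2: "X2 \<in> L2F M (aug_filtration M W) (- \<mu>)"
    using S1 S2 by (simp_all add: is_state_def)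
  let ?E = "\<lambda>t Y. AE \<omega> in M. (X1 t \<omega> + X2 t \<omega>) / 2 = x0 + 1 / Gamma \<alpha> * (\<integral>s\<in>{0..t}. (t - s) powr (\<alpha> - 1)
    * (b * (if s < \<delta> then x0 else (X1 (s - \<delta>) \<omega> + X2 (s - \<delta>) \<omega>) / 2) + c * ((u1 s \<omega> + u2 s \<omega>) / 2)) \<partial>lborel)
    + \<sigma> / Gamma \<alpha> * Y \<omega>"
  have "AE t in lborel. 0 \<le> t \<longrightarrow> (\<exists>Y. is_wiener_integral M W (\<lambda>s. (t - s) powr (\<alpha> - 1)) t Y \<and> ?E t Y)"
    using S1[unfolded is_state_def, THEN conjunct2] S2[unfolded is_state_def, THEN conjunct2]
  proof (eventually_elim, intro impI)
    case (elim t)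
    assume t: "0 \<le> t"
    obtain Y1 Y2 where Y: "is_wiener_integral M W (\<lambda>s. (t - s) powr (\<alpha> - 1)) t Y1"
        "is_wiener_integral M W (\<lambda>s. (t - s) powr (\<alpha> - 1)) t Y2"
      and E1: "AE \<omega> in M. X1 t \<omega> = x0 + 1 / Gamma \<alpha> * (\<integral>s\<in>{0..t}. (t - s) powr (\<alpha> - 1)
        * (b * (if s < \<delta> then x0 else X1 (s - \<delta>) \<omega>) + c * u1 s \<omega>) \<partial>lborel) + \<sigma> / Gamma \<alpha> * Y1 \<omega>"
      and E2: "AE \<omega> in M. X2 t \<omega> = x0 + 1 / Gamma \<alpha> * (\<integral>s\<in>{0..t}. (t - s) powr (\<alpha> - 1)
        * (b * (if s < \<delta> then x0 else X2 (s - \<delta>) \<omega>) + c * u2 s \<omega>) \<partial>lborel) + \<sigma> / Gamma \<alpha> * Y2 \<omega>"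
      using elim t by blast
    have "?E t (\<lambda>\<omega>. (Y1 \<omega> + Y2 \<omega>) / 2)"
      using mild_integrand_integrable_AE[OF M X1 u1 a1 t d, of b x0 c]
        mild_integrand_integrable_AE[OF M X2 u2 a1 t d, of b x0 c] E1 E2
    proof eventually_elim
      case (elim \<omega>)
      then show ?case by (rule mild_equation_midpoint)
    qed
    with is_wiener_integral_midpoint[OF bm t Y]
    show "\<exists>Y. is_wiener_integral M W (\<lambda>s. (t - s) powr (\<alpha> - 1)) t Y \<and> ?E t Y" by blast
  qed
  then show ?thesis
    using L2F_midpoint[OF M X1 X2] by (simp add: is_state_def)
qed

section \<open>Strict convexity of the cost\<close>

definition discounted_sq_dist :: "'a measure \<Rightarrow> real \<Rightarrow> (real \<Rightarrow> 'a \<Rightarrow> real) \<Rightarrow> (real \<Rightarrow> 'a \<Rightarrow> real) \<Rightarrow> ennreal" where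
  "discounted_sq_dist M lam u v =
     (\<integral>\<^sup>+p. ennreal (indicator {0..} (fst p) * exp (- lam * fst p) * (u (fst p) (snd p) - v (fst p) (snd p))\<^sup>2) \<partial>(lborel \<Otimes>\<^sub>M M))"

lemma discounted_sq_dist_density_measurable:
  assumes u: "u \<in> L2F M F \<beta>" and v: "v \<in> L2F M F \<beta>'"
  shows "(\<lambda>p. ennreal (indicator {0..} (fst p) * exp (- lam * fst p) * (u (fst p) (snd p) - v (fst p) (snd p))\<^sup>2))
    \<in> borel_measurable (lborel \<Otimes>\<^sub>M M)"
proof -
  have [measurable]: "(\<lambda>p. indicator {0..} (fst p) * u (fst p) (snd p)) \<in> borel_measurable (lborel \<Otimes>\<^sub>M M)"
    "(\<lambda>p. indicator {0..} (fst p) * v (fst p) (snd p)) \<in> borel_measurable (lborel \<Otimes>\<^sub>M M)"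
    using u v by (simp_all add: L2F_def)
  have "(\<lambda>p. ennreal (indicator {0..} (fst p) * exp (- lam * fst p) * (u (fst p) (snd p) - v (fst p) (snd p))\<^sup>2))
      = (\<lambda>p. ennreal (exp (- lam * fst p) * (indicator {0..} (fst p) * u (fst p) (snd p) - indicator {0..} (fst p) * v (fst p) (snd p))\<^sup>2))"
    by (auto simp: fun_eq_iff indicator_def)
  also have "\<dots> \<in> borel_measurable (lborel \<Otimes>\<^sub>M M)" by measurable
  finally show ?thesis .
qed

lemma discounted_sq_dist_eq_0_imp_AE_eq:
  assumes u: "u \<in> L2F M F \<beta>" and v: "v \<in> L2F M F \<beta>'" and dist: "discounted_sq_dist M lam u v = 0"
  shows "AE p in lborel \<Otimes>\<^sub>M M. fst p \<ge> 0 \<longrightarrow> u (fst p) (snd p) = v (fst p) (snd p)"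
proof -
  have "AE p in lborel \<Otimes>\<^sub>M M. ennreal (indicator {0..} (fst p) * exp (- lam * fst p) * (u (fst p) (snd p) - v (fst p) (snd p))\<^sup>2) = 0"
    using dist nn_integral_0_iff_AE[OF discounted_sq_dist_density_measurable[OF u v]]
    by (simp add: discounted_sq_dist_def)
  then show ?thesis
    by eventually_elim (auto simp: ennreal_eq_0_iff indicator_def mult_le_0_iff)
qed

text \<open>Parallelogram law for the integrand of the cost, with the term \<open>(X\<^sub>1 - X\<^sub>2)\<^sup>2\<close> dropped.\<close>
lemma cost_density_midpoint_le:
  assumes g: "0 < \<gamma>"
  shows "2 * cost_density \<gamma> lam (\<lambda>t \<omega>. (X1 t \<omega> + X2 t \<omega>) / 2) (\<lambda>t \<omega>. (u1 t \<omega> + u2 t \<omega>) / 2) p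
      + ennreal (1 / (2 * \<gamma>)) * ennreal (indicator {0..} (fst p) * exp (- lam * fst p) * (u1 (fst p) (snd p) - u2 (fst p) (snd p))\<^sup>2)
    \<le> cost_density \<gamma> lam X1 u1 p + cost_density \<gamma> lam X2 u2 p"
proof -
  define w where "w = indicator {0..} (fst p) * exp (- lam * fst p)"
  obtain a b x y where ab: "a = X1 (fst p) (snd p)" "b = X2 (fst p) (snd p)"
    and xy: "x = u1 (fst p) (snd p)" "y = u2 (fst p) (snd p)" by blast
  define A where "A = w * (((a + b) / 2)\<^sup>2 + ((x + y) / 2)\<^sup>2 / \<gamma>)"
  define G where "G = w * (x - y)\<^sup>2"
  define C1 where "C1 = w * (a\<^sup>2 + x\<^sup>2 / \<gamma>)"
  define C2 where "C2 = w * (b\<^sup>2 + y\<^sup>2 / \<gamma>)"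
  have w: "0 \<le> w" by (simp add: w_def)
  then have nonneg: "0 \<le> A" "0 \<le> G" "0 \<le> C1" "0 \<le> C2"
    using g by (simp_all add: A_def G_def C1_def C2_def)
  have "2 * A + 1 / (2 * \<gamma>) * G = C1 + C2 - w * (a - b)\<^sup>2 / 2"
    using g by (simp add: A_def G_def C1_def C2_def field_simps power2_eq_square)
  then have le: "2 * A + 1 / (2 * \<gamma>) * G \<le> C1 + C2"
    using w by simp
  have "ennreal (2 * A) = 2 * ennreal A"
    using nonneg by (simp add: ennreal_mult)
  moreover have "ennreal (1 / (2 * \<gamma>) * G) = ennreal (1 / (2 * \<gamma>)) * ennreal G"
    using nonneg g by (intro ennreal_mult) simp_all
  ultimately have "2 * ennreal A + ennreal (1 / (2 * \<gamma>)) * ennreal G = ennreal (2 * A + 1 / (2 * \<gamma>) * G)"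
    using nonneg g by (simp add: ennreal_plus)
  also have "\<dots> \<le> ennreal (C1 + C2)"
    by (rule ennreal_leI[OF le])
  also have "\<dots> = ennreal C1 + ennreal C2"
    using nonneg by (simp add: ennreal_plus)
  finally show ?thesis
    by (simp add: cost_density_def w_def ab xy A_def G_def C1_def C2_def mult.assoc)
qed

lemma cost_midpoint_le:
  assumes M: "prob_space M" and g: "0 < \<gamma>"
    and X1: "X1 \<in> L2F M F \<beta>" and X2: "X2 \<in> L2F M F \<beta>" and u1: "u1 \<in> L2F M F \<beta>" and u2: "u2 \<in> L2F M F \<beta>"
  shows "2 * cost M \<gamma> lam (\<lambda>t \<omega>. (X1 t \<omega> + X2 t \<omega>) / 2) (\<lambda>t \<omega>. (u1 t \<omega> + u2 t \<omega>) / 2)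
      + ennreal (1 / (4 * \<gamma>)) * discounted_sq_dist M lam u1 u2
    \<le> cost M \<gamma> lam X1 u1 + cost M \<gamma> lam X2 u2"
proof -
  let ?X = "\<lambda>t \<omega>. (X1 t \<omega> + X2 t \<omega>) / 2" and ?u = "\<lambda>t \<omega>. (u1 t \<omega> + u2 t \<omega>) / 2"
  let ?I = "\<lambda>X u. \<integral>\<^sup>+p. cost_density \<gamma> lam X u p \<partial>(lborel \<Otimes>\<^sub>M M)"
  let ?g = "\<lambda>p. ennreal (indicator {0..} (fst p) * exp (- lam * fst p) * (u1 (fst p) (snd p) - u2 (fst p) (snd p))\<^sup>2)"
  define h where "h = ennreal (1/2)"
  have X: "?X \<in> L2F M F \<beta>" by (rule L2F_midpoint[OF M X1 X2])
  have u: "?u \<in> L2F M F \<beta>" by (rule L2F_midpoint[OF M u1 u2])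
  note meas = cost_density_measurable[OF X u] cost_density_measurable[OF X1 u1]
    cost_density_measurable[OF X2 u2] discounted_sq_dist_density_measurable[OF u1 u2]
  have "2 * ?I ?X ?u + ennreal (1 / (2 * \<gamma>)) * discounted_sq_dist M lam u1 u2
      = (\<integral>\<^sup>+p. 2 * cost_density \<gamma> lam ?X ?u p + ennreal (1 / (2 * \<gamma>)) * ?g p \<partial>(lborel \<Otimes>\<^sub>M M))"
    using meas by (simp add: discounted_sq_dist_def nn_integral_add nn_integral_cmult del: ennreal_numeral)
  also have "\<dots> \<le> (\<integral>\<^sup>+p. cost_density \<gamma> lam X1 u1 p + cost_density \<gamma> lam X2 u2 p \<partial>(lborel \<Otimes>\<^sub>M M))"
    by (intro nn_integral_mono cost_density_midpoint_le[OF g])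
  also have "\<dots> = ?I X1 u1 + ?I X2 u2"
    using meas by (simp add: nn_integral_add)
  finally have le: "h * (2 * ?I ?X ?u + ennreal (1 / (2 * \<gamma>)) * discounted_sq_dist M lam u1 u2)
      \<le> h * (?I X1 u1 + ?I X2 u2)"
    by (rule mult_left_mono) simp
  have "h * ennreal (1 / (2 * \<gamma>)) = ennreal (1 / 2 * (1 / (2 * \<gamma>)))"
    unfolding h_def using g by (intro ennreal_mult[symmetric]) simp_all
  then have "h * ennreal (1 / (2 * \<gamma>)) = ennreal (1 / (4 * \<gamma>))"
    by simp
  with le show ?thesis
    unfolding cost_eq_pair_integral[OF M X u] cost_eq_pair_integral[OF M X1 u1] cost_eq_pair_integral[OF M X2 u2]
      h_def[symmetric]
    by (simp add: distrib_left mult.assoc[symmetric] mult.commute[of h 2])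
qed

lemma J_less_imp_state:
  assumes "J M W x0 b c \<sigma> \<alpha> \<delta> \<mu> \<gamma> lam u < r"
  obtains X where "is_state M W x0 b c \<sigma> \<alpha> \<delta> \<mu> u X" and "cost M \<gamma> lam X u < r"
  using assms by (auto simp: J_def INF_less_iff)

lemma optimal_value_finite:
  assumes "brownian_motion M W" "1/2 < \<alpha>" "\<alpha> \<le> 1" "0 < \<mu>" "0 \<le> \<delta>" "0 < \<gamma>" "2 * \<mu> \<le> lam" "c \<noteq> 0"
  shows "(INF v\<in>L2F M (aug_filtration M W) (- \<mu>). J M W x0 b c \<sigma> \<alpha> \<delta> \<mu> \<gamma> lam v) \<noteq> \<infinity>"
proof -
  obtain v where "v \<in> L2F M (aug_filtration M W) (- \<mu>)" "J M W x0 b c \<sigma> \<alpha> \<delta> \<mu> \<gamma> lam v < \<infinity>"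
    using exists_finite_cost_control[OF assms] by blast
  then have "(INF v\<in>L2F M (aug_filtration M W) (- \<mu>). J M W x0 b c \<sigma> \<alpha> \<delta> \<mu> \<gamma> lam v) < \<infinity>"
    by (meson INF_lower le_less_trans)
  then show ?thesis by (rule less_imp_neq)
qed

lemma optimal_controls_close:
  assumes bm: "brownian_motion M W" and a1: "1/2 < \<alpha>" and d: "0 \<le> \<delta>" and g: "0 < \<gamma>"
    and o1: "is_optimal_control M W x0 b c \<sigma> \<alpha> \<delta> \<mu> \<gamma> lam u1"
    and o2: "is_optimal_control M W x0 b c \<sigma> \<alpha> \<delta> \<mu> \<gamma> lam u2"
    and fin: "(INF v\<in>L2F M (aug_filtration M W) (- \<mu>). J M W x0 b c \<sigma> \<alpha> \<delta> \<mu> \<gamma> lam v) \<noteq> \<infinity>"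
    and e: "0 < e"
  shows "ennreal (1 / (4 * \<gamma>)) * discounted_sq_dist M lam u1 u2 \<le> ennreal (2 * e)"
proof -
  define L where "L = L2F M (aug_filtration M W) (- \<mu>)"
  define m where "m = (INF v\<in>L. J M W x0 b c \<sigma> \<alpha> \<delta> \<mu> \<gamma> lam v)"
  have m: "m \<noteq> \<infinity>" using fin by (simp add: m_def L_def)
  have u: "u1 \<in> L" "u2 \<in> L" and J: "J M W x0 b c \<sigma> \<alpha> \<delta> \<mu> \<gamma> lam u1 = m" "J M W x0 b c \<sigma> \<alpha> \<delta> \<mu> \<gamma> lam u2 = m"
    using o1 o2 by (simp_all add: is_optimal_control_def L_def m_def)
  have "m < m + ennreal e"
    using ennreal_add_left_cancel_less[of m 0 "ennreal e"] m e by simp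
  then obtain X1 X2 where S: "is_state M W x0 b c \<sigma> \<alpha> \<delta> \<mu> u1 X1" "is_state M W x0 b c \<sigma> \<alpha> \<delta> \<mu> u2 X2"
    and c: "cost M \<gamma> lam X1 u1 < m + ennreal e" "cost M \<gamma> lam X2 u2 < m + ennreal e"
    using J_less_imp_state J by metis
  have X: "X1 \<in> L" "X2 \<in> L" using S by (simp_all add: is_state_def L_def)
  let ?X = "\<lambda>t \<omega>. (X1 t \<omega> + X2 t \<omega>) / 2" and ?u = "\<lambda>t \<omega>. (u1 t \<omega> + u2 t \<omega>) / 2"
  have "?u \<in> L" using L2F_midpoint[OF bm_prob_space[OF bm]] u by (simp add: L_def)
  then have "m \<le> J M W x0 b c \<sigma> \<alpha> \<delta> \<mu> \<gamma> lam ?u" unfolding m_def by (rule INF_lower)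
  also have "\<dots> \<le> cost M \<gamma> lam ?X ?u"
    unfolding J_def by (rule INF_lower) (use is_state_midpoint[OF bm a1 d S] u in \<open>simp add: L_def\<close>)
  finally have "2 * m + ennreal (1 / (4 * \<gamma>)) * discounted_sq_dist M lam u1 u2
      \<le> 2 * cost M \<gamma> lam ?X ?u + ennreal (1 / (4 * \<gamma>)) * discounted_sq_dist M lam u1 u2"
    by (intro add_right_mono mult_left_mono) simp_all
  also have "\<dots> \<le> cost M \<gamma> lam X1 u1 + cost M \<gamma> lam X2 u2"
    using cost_midpoint_le[OF bm_prob_space[OF bm] g] X u by (simp add: L_def)
  also have "\<dots> \<le> (m + ennreal e) + (m + ennreal e)"
    using c by (intro add_mono) simp_all
  also have "\<dots> = 2 * m + ennreal (2 * e)"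
    using e by (simp only: mult_2 ennreal_plus[OF less_imp_le[OF e] less_imp_le[OF e]] add_ac)
  finally have "2 * m + ennreal (1 / (4 * \<gamma>)) * discounted_sq_dist M lam u1 u2 \<le> 2 * m + ennreal (2 * e)" .
  moreover have "2 * m \<noteq> \<infinity>"
    using m by (simp add: ennreal_mult_eq_top_iff)
  ultimately show ?thesis
    by (simp add: ennreal_add_left_cancel_le)
qed

lemma rho_alpha_root_unique:
  fixes b \<alpha> \<delta> :: real
  assumes b: "b \<noteq> 0" and a: "0 < \<alpha>" and d: "0 \<le> \<delta>"
  shows "\<exists>!\<rho>. \<rho> > 0 \<and> \<bar>b\<bar> * (1 + exp (- \<rho> * \<delta>)) * \<rho> powr (- \<alpha>) = 1"
proof -
  define f where "f \<rho> = \<bar>b\<bar> * (1 + exp (- \<rho> * \<delta>)) * \<rho> powr (- \<alpha>)" for \<rho>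
  have bb: "0 < \<bar>b\<bar>" using b by simp
  define r1 where "r1 = \<bar>b\<bar> powr (1 / \<alpha>)"
  define r2 where "r2 = (2 * \<bar>b\<bar>) powr (1 / \<alpha>)"
  have r1p: "0 < r1" using bb by (simp add: r1_def)
  have r12: "r1 \<le> r2" unfolding r1_def r2_def using bb a by (intro powr_mono2) auto
  have p1: "r1 powr (- \<alpha>) = 1 / \<bar>b\<bar>"
    using bb a by (simp add: r1_def powr_powr powr_minus_divide)
  have p2: "r2 powr (- \<alpha>) = 1 / (2 * \<bar>b\<bar>)"
    using bb a by (simp add: r2_def powr_powr powr_minus_divide)
  have f1: "1 \<le> f r1" using bb by (simp add: f_def p1)
  have f2: "f r2 \<le> 1"
  proof -
    have "exp (- r2 * \<delta>) \<le> 1" using d r12 r1p by (simp add: mult_nonneg_nonneg)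
    then show ?thesis using bb by (simp add: f_def p2 field_simps)
  qed
  have cont: "continuous_on {r1..r2} f"
    unfolding f_def using r1p by (intro continuous_intros) auto
  obtain r where r: "r1 \<le> r" "r \<le> r2" "f r = 1"
    using IVT2'[of f r2 1 r1, OF f2 f1 r12 cont] by blast
  have dec: "f y < f x" if "0 < x" "x < y" for x y
  proof -
    have "y powr (- \<alpha>) < x powr (- \<alpha>)" using that a by (intro powr_less_mono2_neg) auto
    moreover have "exp (- y * \<delta>) \<le> exp (- x * \<delta>)" using that d by (simp add: mult_right_mono)
    ultimately have "(1 + exp (- y * \<delta>)) * y powr (- \<alpha>) < (1 + exp (- x * \<delta>)) * x powr (- \<alpha>)"
      by (intro mult_le_less_imp_less) (auto intro: add_pos_pos)
    then show ?thesis using bb by (simp add: f_def mult.assoc)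
  qed
  show ?thesis
  proof (rule ex1I[of _ r])
    show "r > 0 \<and> \<bar>b\<bar> * (1 + exp (- r * \<delta>)) * r powr (- \<alpha>) = 1" using r r1p f_def by auto
    fix y assume y: "y > 0 \<and> \<bar>b\<bar> * (1 + exp (- y * \<delta>)) * y powr (- \<alpha>) = 1"
    show "y = r"
    proof (rule ccontr)
      assume "y \<noteq> r"
      then have "y < r \<or> r < y" by auto
      then show False using dec[of y r] dec[of r y] y r r1p by (auto simp: f_def)
    qed
  qed
qed

lemma rho_alpha_pos:
  assumes b: "b \<noteq> 0" and a: "0 < \<alpha>" and d: "0 \<le> \<delta>"
  shows "0 < rho_alpha b \<alpha> \<delta>"
  using theI'[OF rho_alpha_root_unique[OF assms]] b by (simp add: rho_alpha_def)

lemma rho_alpha_nonneg: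
  assumes a: "0 < \<alpha>" and d: "0 \<le> \<delta>"
  shows "0 \<le> rho_alpha b \<alpha> \<delta>"
  using rho_alpha_pos[OF _ a d, of b] by (cases "b = 0") (auto simp: rho_alpha_def)

theorem lemma5p2:
  fixes M :: "'a measure" and W :: "real \<Rightarrow> 'a \<Rightarrow> real"
    and x0 b c \<sigma> \<gamma> \<alpha> \<delta> lam \<mu> :: real
    and u1 u2 :: "real \<Rightarrow> 'a \<Rightarrow> real"
  assumes "prob_space M" and "complete_measure M"
    and "brownian_motion M W"
    and "c \<noteq> 0" and "\<gamma> > 0" and "1/2 < \<alpha>" and "\<alpha> \<le> 1" and "\<delta> \<ge> 0" and "lam > 0"
    and "\<mu> > rho_alpha b \<alpha> \<delta>" and "lam \<ge> 2 * \<mu>"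
    and "is_optimal_control M W x0 b c \<sigma> \<alpha> \<delta> \<mu> \<gamma> lam u1"
    and "is_optimal_control M W x0 b c \<sigma> \<alpha> \<delta> \<mu> \<gamma> lam u2"
  shows "AE p in lborel \<Otimes>\<^sub>M M. fst p \<ge> 0 \<longrightarrow> u1 (fst p) (snd p) = u2 (fst p) (snd p)"
proof -
  (* prob_space M is part of brownian_motion M W. *)
  have u: "u1 \<in> L2F M (aug_filtration M W) (- \<mu>)" "u2 \<in> L2F M (aug_filtration M W) (- \<mu>)"
    using assms(12,13) by (simp_all add: is_optimal_control_def)
  have "0 < \<mu>" using rho_alpha_nonneg[of \<alpha> \<delta> b] assms(6,8,10) by linarith
  then have fin: "(INF v\<in>L2F M (aug_filtration M W) (- \<mu>). J M W x0 b c \<sigma> \<alpha> \<delta> \<mu> \<gamma> lam v) \<noteq> \<infinity>"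
    by (rule optimal_value_finite[OF assms(3,6,7) _ assms(8,5,11,4)])
  have "ennreal (1 / (4 * \<gamma>)) * discounted_sq_dist M lam u1 u2 \<le> 0 + ennreal e" if "0 < e" for e
  proof -
    have "ennreal (1 / (4 * \<gamma>)) * discounted_sq_dist M lam u1 u2 \<le> ennreal (2 * (e / 2))"
      using that by (intro optimal_controls_close[OF assms(3,6,8,5,12,13) fin]) simp
    then show ?thesis by simp
  qed
  then have "ennreal (1 / (4 * \<gamma>)) * discounted_sq_dist M lam u1 u2 \<le> 0"
    by (rule ennreal_le_epsilon)
  then have "discounted_sq_dist M lam u1 u2 = 0"
    using assms(5) by simp
  then show ?thesis by (rule discounted_sq_dist_eq_0_imp_AE_eq[OF u])
qed

end
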